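(* Let $\mathbf{C}$ and $\mathbf{D}$ be categories, and let $T\colon \mathbf{C}\to\mathbf{C}$ be a varietor that preserves reflexive coequalizers. Then for every monadic functor $G\colon \mathbf{C}\to\mathbf{D}$, the composite $\mathbf{Alg}(T)\xrightarrow{U}\mathbf{C}\xrightarrow{G}\mathbf{D}$ is monadic, where $U$ is the forgetful functor.
   Context: For an endofunctor $T\colon\mathbf{C}\to\mathbf{C}$, the category $\mathbf{Alg}(T)$ has as objects pairs $(X, a\colon TX\to X)$ and as morphisms $(X,a)\to(Y,b)$ the morphisms $h\colon X\to Y$ of $\mathbf{C}$ with $h\circ a = b\circ Th$; the forgetful functor $U\colon \mathbf{Alg}(T)\to\mathbf{C}$ sends $(X,a)$ to $X$ and $h$ to $h$. $T$ is called a varietor if $U$ has a left adjoint. A reflexive coequalizer is a coequalizer of a parallel pair $f,g\colon X\to Y$ having a common section $s\colon Y\to X$ (i.e. $f\circ s=g\circ s=1_Y$); $T$ preserves reflexive coequalizers if it sends such coequalizers to coequalizers. *)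

theory Defs
  imports Main
begin

record ('o, 'm) cat =
  Obj :: "'o set"
  Arr :: "'m set"
  Dom :: "'m \<Rightarrow> 'o"
  Cod :: "'m \<Rightarrow> 'o"
  Id  :: "'o \<Rightarrow> 'm"
  Comp :: "'m \<Rightarrow> 'm \<Rightarrow> 'm"   \<comment> \<open>Comp C g f = g o f\<close>

definition hom :: "('o, 'm) cat \<Rightarrow> 'o \<Rightarrow> 'o \<Rightarrow> 'm set" where
  "hom C X Y = {f \<in> Arr C. Dom C f = X \<and> Cod C f = Y}"

definition category :: "('o, 'm) cat \<Rightarrow> bool" where
  "category C \<longleftrightarrow>
     (\<forall>f\<in>Arr C. Dom C f \<in> Obj C \<and> Cod C f \<in> Obj C) \<and>
     (\<forall>X\<in>Obj C. Id C X \<in> hom C X X) \<and>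
     (\<forall>f\<in>Arr C. \<forall>g\<in>Arr C. Cod C f = Dom C g \<longrightarrow>
         Comp C g f \<in> hom C (Dom C f) (Cod C g)) \<and>
     (\<forall>f\<in>Arr C. Comp C (Id C (Cod C f)) f = f \<and> Comp C f (Id C (Dom C f)) = f) \<and>
     (\<forall>f\<in>Arr C. \<forall>g\<in>Arr C. \<forall>h\<in>Arr C. Cod C f = Dom C g \<longrightarrow> Cod C g = Dom C h \<longrightarrow>
         Comp C h (Comp C g f) = Comp C (Comp C h g) f)"

record ('o1, 'm1, 'o2, 'm2) func =
  omap :: "'o1 \<Rightarrow> 'o2"
  amap :: "'m1 \<Rightarrow> 'm2"

definition is_functor :: "('o1, 'm1) cat \<Rightarrow> ('o2, 'm2) cat \<Rightarrow> ('o1, 'm1, 'o2, 'm2) func \<Rightarrow> bool" where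
  "is_functor C D F \<longleftrightarrow> category C \<and> category D \<and>
     (\<forall>X\<in>Obj C. omap F X \<in> Obj D) \<and>
     (\<forall>f\<in>Arr C. amap F f \<in> hom D (omap F (Dom C f)) (omap F (Cod C f))) \<and>
     (\<forall>X\<in>Obj C. amap F (Id C X) = Id D (omap F X)) \<and>
     (\<forall>f\<in>Arr C. \<forall>g\<in>Arr C. Cod C f = Dom C g \<longrightarrow>
         amap F (Comp C g f) = Comp D (amap F g) (amap F f))"

definition id_functor :: "('o, 'm) cat \<Rightarrow> ('o, 'm, 'o, 'm) func" where
  "id_functor C = \<lparr>omap = (\<lambda>X. X), amap = (\<lambda>f. f)\<rparr>"

definition comp_functor :: "('o2, 'm2, 'o3, 'm3) func \<Rightarrow> ('o1, 'm1, 'o2, 'm2) func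
     \<Rightarrow> ('o1, 'm1, 'o3, 'm3) func" where
  "comp_functor G F = \<lparr>omap = omap G \<circ> omap F, amap = amap G \<circ> amap F\<rparr>"

definition nat_trans :: "('o1, 'm1) cat \<Rightarrow> ('o2, 'm2) cat \<Rightarrow> ('o1, 'm1, 'o2, 'm2) func
     \<Rightarrow> ('o1, 'm1, 'o2, 'm2) func \<Rightarrow> ('o1 \<Rightarrow> 'm2) \<Rightarrow> bool" where
  "nat_trans C D F G \<alpha> \<longleftrightarrow> is_functor C D F \<and> is_functor C D G \<and>
     (\<forall>X\<in>Obj C. \<alpha> X \<in> hom D (omap F X) (omap G X)) \<and>
     (\<forall>f\<in>Arr C. Comp D (\<alpha> (Cod C f)) (amap F f) = Comp D (amap G f) (\<alpha> (Dom C f)))"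

definition iso :: "('o, 'm) cat \<Rightarrow> 'm \<Rightarrow> bool" where
  "iso C f \<longleftrightarrow> f \<in> Arr C \<and> (\<exists>g\<in>hom C (Cod C f) (Dom C f).
      Comp C g f = Id C (Dom C f) \<and> Comp C f g = Id C (Cod C f))"

definition nat_iso :: "('o1, 'm1) cat \<Rightarrow> ('o2, 'm2) cat \<Rightarrow> ('o1, 'm1, 'o2, 'm2) func
     \<Rightarrow> ('o1, 'm1, 'o2, 'm2) func \<Rightarrow> ('o1 \<Rightarrow> 'm2) \<Rightarrow> bool" where
  "nat_iso C D F G \<alpha> \<longleftrightarrow> nat_trans C D F G \<alpha> \<and> (\<forall>X\<in>Obj C. iso D (\<alpha> X))"

definition equivalence :: "('o1, 'm1) cat \<Rightarrow> ('o2, 'm2) cat \<Rightarrow> ('o1, 'm1, 'o2, 'm2) func \<Rightarrow> bool" where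
  "equivalence A B K \<longleftrightarrow> is_functor A B K \<and>
     (\<exists>L :: ('o2, 'm2, 'o1, 'm1) func. is_functor B A L \<and>
        (\<exists>\<alpha>. nat_iso A A (id_functor A) (comp_functor L K) \<alpha>) \<and>
        (\<exists>\<beta>. nat_iso B B (comp_functor K L) (id_functor B) \<beta>))"

definition adjunction :: "('oc, 'mc) cat \<Rightarrow> ('od, 'md) cat \<Rightarrow> ('od, 'md, 'oc, 'mc) func
     \<Rightarrow> ('oc, 'mc, 'od, 'md) func \<Rightarrow> ('od \<Rightarrow> 'md) \<Rightarrow> ('oc \<Rightarrow> 'mc) \<Rightarrow> bool" where
  "adjunction C D F G \<eta> \<epsilon> \<longleftrightarrow> is_functor D C F \<and> is_functor C D G \<and>
     nat_trans D D (id_functor D) (comp_functor G F) \<eta> \<and>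
     nat_trans C C (comp_functor F G) (id_functor C) \<epsilon> \<and>
     (\<forall>X\<in>Obj D. Comp C (\<epsilon> (omap F X)) (amap F (\<eta> X)) = Id C (omap F X)) \<and>
     (\<forall>Y\<in>Obj C. Comp D (amap G (\<epsilon> Y)) (\<eta> (omap G Y)) = Id D (omap G Y))"

definition has_left_adjoint :: "('oc, 'mc) cat \<Rightarrow> ('od, 'md) cat \<Rightarrow> ('oc, 'mc, 'od, 'md) func \<Rightarrow> bool" where
  "has_left_adjoint C D G \<longleftrightarrow>
     (\<exists>(F :: ('od, 'md, 'oc, 'mc) func) \<eta> \<epsilon>. adjunction C D F G \<eta> \<epsilon>)"

definition Alg_cat :: "('o, 'm) cat \<Rightarrow> ('o, 'm, 'o, 'm) func
     \<Rightarrow> ('o \<times> 'm, ('o \<times> 'm) \<times> 'm \<times> ('o \<times> 'm)) cat" where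
  "Alg_cat C T =
    (let Ob = {(X, a). X \<in> Obj C \<and> a \<in> hom C (omap T X) X} in
     \<lparr>Obj = Ob,
      Arr = {(A, h, B). A \<in> Ob \<and> B \<in> Ob \<and> h \<in> hom C (fst A) (fst B) \<and>
                        Comp C h (snd A) = Comp C (snd B) (amap T h)},
      Dom = (\<lambda>(A, h, B). A),
      Cod = (\<lambda>(A, h, B). B),
      Id = (\<lambda>A. (A, Id C (fst A), A)),
      Comp = (\<lambda>(B', g, E) (A, f, B). (A, Comp C g f, E))\<rparr>)"

definition forget :: "('o, 'm) cat \<Rightarrow> ('o, 'm, 'o, 'm) func
     \<Rightarrow> ('o \<times> 'm, ('o \<times> 'm) \<times> 'm \<times> ('o \<times> 'm), 'o, 'm) func" where
  "forget C T = \<lparr>omap = fst, amap = (\<lambda>(A, h, B). h)\<rparr>"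

definition EM_cat :: "('o, 'm) cat \<Rightarrow> ('o, 'm, 'o, 'm) func \<Rightarrow> ('o \<Rightarrow> 'm) \<Rightarrow> ('o \<Rightarrow> 'm)
     \<Rightarrow> ('o \<times> 'm, ('o \<times> 'm) \<times> 'm \<times> ('o \<times> 'm)) cat" where
  "EM_cat D T \<eta> \<mu> =
    (let Ob = {(X, a). X \<in> Obj D \<and> a \<in> hom D (omap T X) X \<and>
                      Comp D a (\<eta> X) = Id D X \<and>
                      Comp D a (amap T a) = Comp D a (\<mu> X)} in
     \<lparr>Obj = Ob,
      Arr = {(A, h, B). A \<in> Ob \<and> B \<in> Ob \<and> h \<in> hom D (fst A) (fst B) \<and>
                        Comp D h (snd A) = Comp D (snd B) (amap T h)},
      Dom = (\<lambda>(A, h, B). A),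
      Cod = (\<lambda>(A, h, B). B),
      Id = (\<lambda>A. (A, Id D (fst A), A)),
      Comp = (\<lambda>(B', g, E) (A, f, B). (A, Comp D g f, E))\<rparr>)"

definition adj_mult :: "('od, 'md, 'oc, 'mc) func \<Rightarrow> ('oc, 'mc, 'od, 'md) func
     \<Rightarrow> ('oc \<Rightarrow> 'mc) \<Rightarrow> 'od \<Rightarrow> 'md" where
  "adj_mult F G \<epsilon> X = amap G (\<epsilon> (omap F X))"

definition comparison :: "('oc, 'mc) cat \<Rightarrow> ('oc, 'mc, 'od, 'md) func \<Rightarrow> ('oc \<Rightarrow> 'mc)
     \<Rightarrow> ('oc, 'mc, 'od \<times> 'md, ('od \<times> 'md) \<times> 'md \<times> ('od \<times> 'md)) func" where
  "comparison C G \<epsilon> =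
    (let K = (\<lambda>Y. (omap G Y, amap G (\<epsilon> Y))) in
     \<lparr>omap = K, amap = (\<lambda>f. (K (Dom C f), amap G f, K (Cod C f)))\<rparr>)"

definition monadic :: "('oc, 'mc) cat \<Rightarrow> ('od, 'md) cat \<Rightarrow> ('oc, 'mc, 'od, 'md) func \<Rightarrow> bool" where
  "monadic C D G \<longleftrightarrow>
     (\<exists>(F :: ('od, 'md, 'oc, 'mc) func) \<eta> \<epsilon>. adjunction C D F G \<eta> \<epsilon> \<and>
        equivalence C (EM_cat D (comp_functor G F) \<eta> (adj_mult F G \<epsilon>)) (comparison C G \<epsilon>))"

definition varietor :: "('o, 'm) cat \<Rightarrow> ('o, 'm, 'o, 'm) func \<Rightarrow> bool" where
  "varietor C T \<longleftrightarrow> is_functor C C T \<and> has_left_adjoint (Alg_cat C T) C (forget C T)"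

definition coequalizer :: "('o, 'm) cat \<Rightarrow> 'm \<Rightarrow> 'm \<Rightarrow> 'm \<Rightarrow> bool" where
  "coequalizer C f g q \<longleftrightarrow>
     f \<in> Arr C \<and> g \<in> Arr C \<and> Dom C f = Dom C g \<and> Cod C f = Cod C g \<and>
     q \<in> Arr C \<and> Dom C q = Cod C f \<and> Comp C q f = Comp C q g \<and>
     (\<forall>h\<in>Arr C. Dom C h = Cod C f \<and> Comp C h f = Comp C h g \<longrightarrow>
        (\<exists>!u. u \<in> hom C (Cod C q) (Cod C h) \<and> Comp C u q = h))"

definition reflexive_pair :: "('o, 'm) cat \<Rightarrow> 'm \<Rightarrow> 'm \<Rightarrow> bool" where
  "reflexive_pair C f g \<longleftrightarrow>
     f \<in> Arr C \<and> g \<in> Arr C \<and> Dom C f = Dom C g \<and> Cod C f = Cod C g \<and>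
     (\<exists>s\<in>hom C (Cod C f) (Dom C f).
        Comp C f s = Id C (Cod C f) \<and> Comp C g s = Id C (Cod C f))"

definition preserves_reflexive_coequalizers ::
    "('o1, 'm1) cat \<Rightarrow> ('o2, 'm2) cat \<Rightarrow> ('o1, 'm1, 'o2, 'm2) func \<Rightarrow> bool" where
  "preserves_reflexive_coequalizers C D T \<longleftrightarrow>
     (\<forall>f g q. reflexive_pair C f g \<and> coequalizer C f g q \<longrightarrow>
        coequalizer D (amap T f) (amap T g) (amap T q))"

end

theory Submission
  imports Defs
begin

text \<open>By Beck's monadicity theorem it suffices that the composite right adjoint \<open>G U\<close> (whose left
  adjoint is the composite of the two left adjoints) reflects isomorphisms and that, for every
  Eilenberg-Moore algebra \<open>(Y, y)\<close> of the composite monad, the canonical pair \<open>(F y, \<epsilon> (F Y))\<close>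
  has a coequalizer preserved by \<open>G U\<close>. Both \<open>U\<close> and the monadic \<open>G\<close> reflect isomorphisms.
  The canonical pair is reflexive, with common section \<open>F (\<eta> Y)\<close>, and its image under \<open>G U\<close> is
  split by \<open>y\<close>. A monadic functor creates coequalizers of pairs with split images, so the
  image of the pair under \<open>U\<close> has a coequalizer preserved by \<open>G\<close>; as \<open>T\<close> preserves reflexive
  coequalizers, this coequalizer carries a unique algebra structure making it a coequalizer in
  \<open>Alg(T)\<close>.\<close>

context
  fixes C :: "('o, 'm) cat"
  assumes cat: "category C"
begin

lemma cat_dom_obj: "f \<in> Arr C \<Longrightarrow> Dom C f \<in> Obj C"
  using cat unfolding category_def by blast
lemma cat_cod_obj: "f \<in> Arr C \<Longrightarrow> Cod C f \<in> Obj C"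
  using cat unfolding category_def by blast
lemma cat_id_arr: "X \<in> Obj C \<Longrightarrow> Id C X \<in> Arr C"
  using cat unfolding category_def hom_def by blast
lemma cat_id_dom: "X \<in> Obj C \<Longrightarrow> Dom C (Id C X) = X"
  using cat unfolding category_def hom_def by blast
lemma cat_id_cod: "X \<in> Obj C \<Longrightarrow> Cod C (Id C X) = X"
  using cat unfolding category_def hom_def by blast
lemma cat_comp_arr: "f \<in> Arr C \<Longrightarrow> g \<in> Arr C \<Longrightarrow> Cod C f = Dom C g \<Longrightarrow> Comp C g f \<in> Arr C"
  using cat unfolding category_def hom_def by blast
lemma cat_comp_dom: "f \<in> Arr C \<Longrightarrow> g \<in> Arr C \<Longrightarrow> Cod C f = Dom C g \<Longrightarrow> Dom C (Comp C g f) = Dom C f"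
  using cat unfolding category_def hom_def by blast
lemma cat_comp_cod: "f \<in> Arr C \<Longrightarrow> g \<in> Arr C \<Longrightarrow> Cod C f = Dom C g \<Longrightarrow> Cod C (Comp C g f) = Cod C g"
  using cat unfolding category_def hom_def by blast
lemma cat_idl: "f \<in> Arr C \<Longrightarrow> Cod C f = Y \<Longrightarrow> Comp C (Id C Y) f = f"
  using cat unfolding category_def by blast
lemma cat_idr: "f \<in> Arr C \<Longrightarrow> Dom C f = X \<Longrightarrow> Comp C f (Id C X) = f"
  using cat unfolding category_def by blast
lemma cat_assoc:
  "f \<in> Arr C \<Longrightarrow> g \<in> Arr C \<Longrightarrow> h \<in> Arr C \<Longrightarrow> Cod C f = Dom C g \<Longrightarrow> Cod C g = Dom C h
    \<Longrightarrow> Comp C (Comp C h g) f = Comp C h (Comp C g f)"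
  using cat unfolding category_def by metis

end

lemmas cat_simps = cat_dom_obj cat_cod_obj cat_id_arr cat_id_dom cat_id_cod cat_comp_arr cat_comp_dom
  cat_comp_cod cat_idl cat_idr cat_assoc

lemma comp_reassoc:
  assumes "category C" "f \<in> Arr C" "g \<in> Arr C" "r \<in> Arr C" "Cod C r = Dom C f" "Cod C f = Dom C g"
    and "Comp C g f = k"
  shows "Comp C g (Comp C f r) = Comp C k r"
  using cat_assoc[OF assms(1) assms(4) assms(2) assms(3) assms(5) assms(6)] assms(7) by simp

lemma comp_reassoc_eq:
  assumes "category C" "f \<in> Arr C" "g \<in> Arr C" "f' \<in> Arr C" "g' \<in> Arr C" "r \<in> Arr C"
    and "Cod C r = Dom C f" "Cod C f = Dom C g" "Dom C f' = Dom C f" "Cod C f' = Dom C g'"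
    and "Comp C g f = Comp C g' f'"
  shows "Comp C g (Comp C f r) = Comp C g' (Comp C f' r)"
proof -
  have "Comp C g (Comp C f r) = Comp C (Comp C g f) r" using assms(1-8) by (simp add: cat_simps)
  also have "\<dots> = Comp C (Comp C g' f') r" using assms(11) by simp
  also have "\<dots> = Comp C g' (Comp C f' r)" using assms(1-10) by (simp add: cat_simps)
  finally show ?thesis .
qed

lemma comp_reassoc_id:
  assumes "category C" "f \<in> Arr C" "g \<in> Arr C" "r \<in> Arr C" "Cod C r = Dom C f" "Cod C f = Dom C g"
    and "Comp C g f = Id C (Dom C f)"
  shows "Comp C g (Comp C f r) = r"
  using comp_reassoc[OF assms] assms by (simp add: cat_simps)

context
  fixes C :: "('o1, 'm1) cat" and D :: "('o2, 'm2) cat" and F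
  assumes F: "is_functor C D F"
begin

lemma functor_dom_category: "category C" using F unfolding is_functor_def by blast
lemma functor_cod_category: "category D" using F unfolding is_functor_def by blast
lemma functor_obj: "X \<in> Obj C \<Longrightarrow> omap F X \<in> Obj D" using F unfolding is_functor_def by blast
lemma functor_arr: "f \<in> Arr C \<Longrightarrow> amap F f \<in> Arr D" using F unfolding is_functor_def hom_def by blast
lemma functor_dom: "f \<in> Arr C \<Longrightarrow> Dom D (amap F f) = omap F (Dom C f)"
  using F unfolding is_functor_def hom_def by blast
lemma functor_cod: "f \<in> Arr C \<Longrightarrow> Cod D (amap F f) = omap F (Cod C f)"
  using F unfolding is_functor_def hom_def by blast
lemma functor_id: "X \<in> Obj C \<Longrightarrow> amap F (Id C X) = Id D (omap F X)" using F unfolding is_functor_def by blast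
lemma functor_comp:
  "f \<in> Arr C \<Longrightarrow> g \<in> Arr C \<Longrightarrow> Cod C f = Dom C g \<Longrightarrow> amap F (Comp C g f) = Comp D (amap F g) (amap F f)"
  using F unfolding is_functor_def by blast

end

lemmas functor_typing = functor_obj functor_arr functor_dom functor_cod
lemmas functor_simps = functor_typing functor_id functor_comp

lemma functor_comp_eq:
  assumes F: "is_functor C D F" and "f \<in> Arr C" "g \<in> Arr C" "f' \<in> Arr C" "g' \<in> Arr C"
    and "Cod C f = Dom C g" "Cod C f' = Dom C g'" "Comp C g f = Comp C g' f'"
  shows "Comp D (amap F g) (amap F f) = Comp D (amap F g') (amap F f')"
  using assms functor_comp[OF F] by metis

lemma functor_comp_eq_id:
  assumes F: "is_functor C D F" and "f \<in> Arr C" "g \<in> Arr C"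
    and "Cod C f = Dom C g" "Comp C g f = Id C X" "X \<in> Obj C"
  shows "Comp D (amap F g) (amap F f) = Id D (omap F X)"
  using assms functor_comp[OF F] functor_id[OF F] by metis

lemma omap_comp [simp]: "omap (comp_functor G F) X = omap G (omap F X)" by (simp add: comp_functor_def)
lemma amap_comp [simp]: "amap (comp_functor G F) f = amap G (amap F f)" by (simp add: comp_functor_def)
lemma omap_id [simp]: "omap (id_functor C) X = X" by (simp add: id_functor_def)
lemma amap_id [simp]: "amap (id_functor C) f = f" by (simp add: id_functor_def)

lemma is_functor_comp:
  assumes F: "is_functor C D F" and G: "is_functor D E G"
  shows "is_functor C E (comp_functor G F)"
  unfolding is_functor_def hom_def
  using F G functor_dom_category[OF F] functor_cod_category[OF G] by (simp add: functor_simps)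

lemma is_functor_id: "category C \<Longrightarrow> is_functor C C (id_functor C)"
  unfolding is_functor_def hom_def by (simp add: cat_simps)

context
  fixes C :: "('o1, 'm1) cat" and D :: "('o2, 'm2) cat" and F G \<alpha>
  assumes a: "nat_trans C D F G \<alpha>"
begin

lemma nat_trans_arr: "X \<in> Obj C \<Longrightarrow> \<alpha> X \<in> Arr D" using a unfolding nat_trans_def hom_def by blast
lemma nat_trans_dom: "X \<in> Obj C \<Longrightarrow> Dom D (\<alpha> X) = omap F X" using a unfolding nat_trans_def hom_def by blast
lemma nat_trans_cod: "X \<in> Obj C \<Longrightarrow> Cod D (\<alpha> X) = omap G X" using a unfolding nat_trans_def hom_def by blast
lemma nat_trans_natural: "f \<in> Arr C \<Longrightarrow> Comp D (\<alpha> (Cod C f)) (amap F f) = Comp D (amap G f) (\<alpha> (Dom C f))"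
  using a unfolding nat_trans_def by blast

end

definition inv_arr :: "('o, 'm) cat \<Rightarrow> 'm \<Rightarrow> 'm" where
  "inv_arr C f = (SOME g. g \<in> hom C (Cod C f) (Dom C f) \<and> Comp C g f = Id C (Dom C f) \<and> Comp C f g = Id C (Cod C f))"

lemma iso_inv_arr:
  assumes "iso C f"
  shows "inv_arr C f \<in> Arr C" "Dom C (inv_arr C f) = Cod C f" "Cod C (inv_arr C f) = Dom C f"
    "Comp C (inv_arr C f) f = Id C (Dom C f)" "Comp C f (inv_arr C f) = Id C (Cod C f)"
proof -
  have "\<exists>g. g \<in> hom C (Cod C f) (Dom C f) \<and> Comp C g f = Id C (Dom C f) \<and> Comp C f g = Id C (Cod C f)"
    using assms unfolding iso_def by blast
  then have "inv_arr C f \<in> hom C (Cod C f) (Dom C f) \<and> Comp C (inv_arr C f) f = Id C (Dom C f) \<and>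
      Comp C f (inv_arr C f) = Id C (Cod C f)"
    unfolding inv_arr_def by (rule someI_ex)
  then show "inv_arr C f \<in> Arr C" "Dom C (inv_arr C f) = Cod C f" "Cod C (inv_arr C f) = Dom C f"
    "Comp C (inv_arr C f) f = Id C (Dom C f)" "Comp C f (inv_arr C f) = Id C (Cod C f)"
    by (auto simp: hom_def)
qed

lemma iso_arr: "iso C f \<Longrightarrow> f \<in> Arr C" by (simp add: iso_def)

lemma isoI:
  "f \<in> Arr C \<Longrightarrow> g \<in> Arr C \<Longrightarrow> Dom C g = Cod C f \<Longrightarrow> Cod C g = Dom C f \<Longrightarrow>
    Comp C g f = Id C (Dom C f) \<Longrightarrow> Comp C f g = Id C (Cod C f) \<Longrightarrow> iso C f"
  unfolding iso_def hom_def by blast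

lemma inv_comp_cancel:
  assumes "category C" "iso C f" "r \<in> Arr C" "Cod C r = Dom C f"
  shows "Comp C (inv_arr C f) (Comp C f r) = r"
  using iso_inv_arr[OF assms(2)] iso_arr[OF assms(2)] assms
  by (simp add: cat_simps comp_reassoc[of C f "inv_arr C f"])

lemma comp_inv_cancel:
  assumes "category C" "iso C f" "r \<in> Arr C" "Cod C r = Cod C f"
  shows "Comp C f (Comp C (inv_arr C f) r) = r"
  using iso_inv_arr[OF assms(2)] iso_arr[OF assms(2)] assms
  by (simp add: cat_simps comp_reassoc[of C "inv_arr C f" f])

lemma iso_inv_arr_iso: "iso C f \<Longrightarrow> iso C (inv_arr C f)"
  using iso_inv_arr[of C f] iso_arr[of C f] by (intro isoI[of _ _ f]) auto

lemma functor_preserves_iso: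
  assumes F: "is_functor C D F" and f: "iso C f"
  shows "iso D (amap F f)"
proof (rule isoI[of _ _ "amap F (inv_arr C f)"])
  note i = iso_inv_arr[OF f] and a = iso_arr[OF f] and cC = functor_dom_category[OF F]
  show "Comp D (amap F (inv_arr C f)) (amap F f) = Id D (Dom D (amap F f))"
    using functor_comp_eq_id[OF F, of f "inv_arr C f" "Dom C f"] i a cC F by (simp add: functor_simps cat_simps)
  show "Comp D (amap F f) (amap F (inv_arr C f)) = Id D (Cod D (amap F f))"
    using functor_comp_eq_id[OF F, of "inv_arr C f" f "Cod C f"] i a cC F by (simp add: functor_simps cat_simps)
qed (use iso_inv_arr[OF f] iso_arr[OF f] F in \<open>simp_all add: functor_simps\<close>)

lemma iso_epi:
  assumes "category C" and f: "iso C f" and "u \<in> Arr C" "v \<in> Arr C"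
    and "Dom C u = Cod C f" "Dom C v = Cod C f" "Comp C u f = Comp C v f"
  shows "u = v"
proof -
  note i = iso_inv_arr[OF f] and a = iso_arr[OF f]
  have "u = Comp C (Comp C u f) (inv_arr C f)" using assms(1-5) i a by (simp add: cat_simps comp_inv_cancel)
  also have "\<dots> = Comp C (Comp C v f) (inv_arr C f)" using assms by simp
  also have "\<dots> = v" using assms(1-4,6) i a by (simp add: cat_simps comp_inv_cancel)
  finally show ?thesis .
qed

lemma iso_mono:
  assumes "category C" and f: "iso C f" and "u \<in> Arr C" "v \<in> Arr C"
    and "Cod C u = Dom C f" "Cod C v = Dom C f" "Comp C f u = Comp C f v"
  shows "u = v"
proof -
  note i = iso_inv_arr[OF f] and a = iso_arr[OF f]
  have "u = Comp C (inv_arr C f) (Comp C f u)" using assms(1-5) i a by (simp add: cat_simps inv_comp_cancel)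
  also have "\<dots> = Comp C (inv_arr C f) (Comp C f v)" using assms by simp
  also have "\<dots> = v" using assms(1-4,6) i a by (simp add: cat_simps inv_comp_cancel)
  finally show ?thesis .
qed

lemma split_epi_cancel:
  assumes "category C" and "e \<in> Arr C" "s \<in> Arr C" "Dom C s = Cod C e" "Cod C s = Dom C e"
    and "Comp C e s = Id C (Cod C e)" "u \<in> Arr C" "v \<in> Arr C" "Dom C u = Cod C e" "Dom C v = Cod C e"
    and "Comp C u e = Comp C v e"
  shows "u = v"
proof -
  have "u = Comp C (Comp C u e) s" using assms(1-10) by (simp add: cat_simps)
  also have "\<dots> = Comp C (Comp C v e) s" using assms(11) by simp
  also have "\<dots> = v" using assms(1-10) by (simp add: cat_simps)
  finally show ?thesis .
qed

lemma coequalizerD: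
  assumes "coequalizer C f g q"
  shows "f \<in> Arr C" "g \<in> Arr C" "q \<in> Arr C" "Dom C f = Dom C g" "Cod C f = Cod C g"
    "Dom C q = Cod C f" "Comp C q f = Comp C q g"
  using assms unfolding coequalizer_def by auto

lemma coequalizer_factor:
  assumes "coequalizer C f g q" "h \<in> Arr C" "Dom C h = Cod C f" "Comp C h f = Comp C h g"
  obtains u where "u \<in> Arr C" "Dom C u = Cod C q" "Cod C u = Cod C h" "Comp C u q = h"
  using assms unfolding coequalizer_def hom_def by blast

lemma coequalizer_epi:
  assumes c: "category C" and q: "coequalizer C f g q" and "u \<in> Arr C" "v \<in> Arr C"
    and "Dom C u = Cod C q" "Dom C v = Cod C q" "Cod C u = Cod C v" "Comp C u q = Comp C v q"
  shows "u = v"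
proof -
  note a = coequalizerD[OF q]
  let ?h = "Comp C u q"
  have h: "?h \<in> Arr C" "Dom C ?h = Cod C f" using a assms c by (simp_all add: cat_simps)
  have "Comp C ?h f = Comp C ?h g"
    using a assms c by (simp add: cat_simps)
  then have "\<exists>!w. w \<in> hom C (Cod C q) (Cod C ?h) \<and> Comp C w q = ?h"
    using q h unfolding coequalizer_def by blast
  moreover have "u \<in> hom C (Cod C q) (Cod C ?h)" "v \<in> hom C (Cod C q) (Cod C ?h)"
    using a assms c by (simp_all add: cat_simps hom_def)
  ultimately show ?thesis using assms by metis
qed

lemma coequalizer_comp_iso:
  assumes c: "category C" and q: "coequalizer C f g q" and j: "iso C j" and d: "Dom C j = Cod C q"
  shows "coequalizer C f g (Comp C j q)"
proof -
  note a = coequalizerD[OF q] and ji = iso_inv_arr[OF j] and ja = iso_arr[OF j]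
  have 1: "Comp C j q \<in> Arr C" "Dom C (Comp C j q) = Cod C f" "Comp C (Comp C j q) f = Comp C (Comp C j q) g"
    using a ja d c by (simp_all add: cat_simps)
  show ?thesis unfolding coequalizer_def
  proof (intro conjI ballI impI)
    fix h assume h: "h \<in> Arr C" "Dom C h = Cod C f \<and> Comp C h f = Comp C h g"
    then obtain u where u: "u \<in> Arr C" "Dom C u = Cod C q" "Cod C u = Cod C h" "Comp C u q = h"
      using coequalizer_factor[OF q] by metis
    show "\<exists>!w. w \<in> hom C (Cod C (Comp C j q)) (Cod C h) \<and> Comp C w (Comp C j q) = h"
    proof
      show "Comp C u (inv_arr C j) \<in> hom C (Cod C (Comp C j q)) (Cod C h) \<and> Comp C (Comp C u (inv_arr C j)) (Comp C j q) = h"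
        using u ji ja a c d j by (simp add: cat_simps hom_def inv_comp_cancel)
    next
      fix w assume w: "w \<in> hom C (Cod C (Comp C j q)) (Cod C h) \<and> Comp C w (Comp C j q) = h"
      have "Comp C w j = u"
        using coequalizer_epi[OF c q, of "Comp C w j" u] w u a ja d c by (simp add: cat_simps hom_def)
      then show "w = Comp C u (inv_arr C j)"
        using w ja ji a d c j by (auto simp add: cat_simps hom_def comp_inv_cancel)
    qed
  qed (use a 1 in auto)
qed

lemma coequalizer_unique_iso:
  assumes c: "category C" and q1: "coequalizer C f g q1" and q2: "coequalizer C f g q2"
    and "k \<in> Arr C" "Dom C k = Cod C q1" "Cod C k = Cod C q2" "Comp C k q1 = q2"
  shows "iso C k"
proof -
  note a1 = coequalizerD[OF q1] and a2 = coequalizerD[OF q2]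
  obtain d where d: "d \<in> Arr C" "Dom C d = Cod C q2" "Cod C d = Cod C q1" "Comp C d q2 = q1"
    using coequalizer_factor[OF q2, of q1] a1 a2 by metis
  have "Comp C d k = Id C (Cod C q1)"
    using coequalizer_epi[OF c q1, of "Comp C d k" "Id C (Cod C q1)"] d assms a1 a2 by (simp add: cat_simps comp_reassoc)
  moreover have "Comp C k d = Id C (Cod C q2)"
    using coequalizer_epi[OF c q2, of "Comp C k d" "Id C (Cod C q2)"] d assms a1 a2 by (simp add: cat_simps comp_reassoc)
  ultimately show ?thesis using d assms by (intro isoI[of _ _ d]) auto
qed

definition split_fork :: "('o, 'm) cat \<Rightarrow> 'm \<Rightarrow> 'm \<Rightarrow> 'm \<Rightarrow> 'm \<Rightarrow> 'm \<Rightarrow> bool" where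
  "split_fork C f g e s t \<longleftrightarrow> (\<exists>X Y Z. f \<in> hom C X Y \<and> g \<in> hom C X Y \<and> e \<in> hom C Y Z \<and>
     s \<in> hom C Z Y \<and> t \<in> hom C Y X \<and> Comp C e f = Comp C e g \<and> Comp C e s = Id C Z \<and>
     Comp C g t = Id C Y \<and> Comp C f t = Comp C s e)"

lemma split_coequalizer:
  assumes c: "category C" and "split_fork C f g e s t"
  shows "coequalizer C f g e"
proof -
  obtain X Y Z where ar: "f \<in> hom C X Y" "g \<in> hom C X Y" "e \<in> hom C Y Z" "s \<in> hom C Z Y" "t \<in> hom C Y X"
    and es: "Comp C e s = Id C Z" and gt: "Comp C g t = Id C Y" and ft: "Comp C f t = Comp C s e"
    and ef: "Comp C e f = Comp C e g"
    using assms(2) unfolding split_fork_def by blast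
  show ?thesis unfolding coequalizer_def
  proof (intro conjI ballI impI)
    fix h assume h: "h \<in> Arr C" "Dom C h = Cod C f \<and> Comp C h f = Comp C h g"
    show "\<exists>!u. u \<in> hom C (Cod C e) (Cod C h) \<and> Comp C u e = h"
    proof
      have "Comp C (Comp C h s) e = Comp C h (Comp C s e)" using c ar h by (simp add: cat_simps hom_def)
      also have "\<dots> = Comp C h (Comp C f t)" using ft by simp
      also have "\<dots> = Comp C (Comp C h f) t" using c ar h by (intro cat_assoc[symmetric]) (auto simp: hom_def)
      also have "\<dots> = Comp C (Comp C h g) t" using h by simp
      also have "\<dots> = h" using c ar h gt by (simp add: cat_simps hom_def)
      finally show "Comp C h s \<in> hom C (Cod C e) (Cod C h) \<and> Comp C (Comp C h s) e = h"
        using c ar h by (simp add: cat_simps hom_def)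
    next
      fix u assume u: "u \<in> hom C (Cod C e) (Cod C h) \<and> Comp C u e = h"
      then have "u = Comp C u (Comp C e s)" using c ar es by (simp add: cat_simps hom_def)
      also have "\<dots> = Comp C (Comp C u e) s" using c ar u by (intro cat_assoc[symmetric]) (auto simp: hom_def)
      also have "\<dots> = Comp C h s" using u by simp
      finally show "u = Comp C h s" .
    qed
  qed (use c ar ef in \<open>auto simp: hom_def cat_simps\<close>)
qed

lemma functor_preserves_reflexive_pair:
  assumes K: "is_functor A B K" and rp: "reflexive_pair A f g"
  shows "reflexive_pair B (amap K f) (amap K g)"
proof -
  obtain s where fg: "f \<in> Arr A" "g \<in> Arr A" "Dom A f = Dom A g" "Cod A f = Cod A g"
    and s: "s \<in> hom A (Cod A f) (Dom A f)" "Comp A f s = Id A (Cod A f)" "Comp A g s = Id A (Cod A f)"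
    using rp unfolding reflexive_pair_def by blast
  have "Cod A f \<in> Obj A" using fg functor_dom_category[OF K] by (simp add: cat_simps)
  then show ?thesis unfolding reflexive_pair_def using K fg s functor_comp_eq_id[OF K, of s f "Cod A f"]
      functor_comp_eq_id[OF K, of s g "Cod A f"]
    by (intro conjI bexI[of _ "amap K s"]) (auto simp: functor_simps hom_def)
qed

text \<open>\<open>Alg(T)\<close> and the Eilenberg-Moore category are both instances of the full subcategory of
  \<open>T\<close>-algebras on a set \<open>Ob\<close> of algebras; an arrow is a triple (source, underlying arrow, target).\<close>

definition algebra_cat :: "('o \<times> 'm) set \<Rightarrow> ('o, 'm) cat \<Rightarrow> ('o, 'm, 'o, 'm) func
     \<Rightarrow> ('o \<times> 'm, ('o \<times> 'm) \<times> 'm \<times> ('o \<times> 'm)) cat" where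
  "algebra_cat Ob C T = \<lparr>Obj = Ob,
      Arr = {(A, h, B). A \<in> Ob \<and> B \<in> Ob \<and> h \<in> hom C (fst A) (fst B) \<and>
                        Comp C h (snd A) = Comp C (snd B) (amap T h)},
      Dom = (\<lambda>(A, h, B). A),
      Cod = (\<lambda>(A, h, B). B),
      Id = (\<lambda>A. (A, Id C (fst A), A)),
      Comp = (\<lambda>(B', g, E) (A, f, B). (A, Comp C g f, E))\<rparr>"

definition algebra_set :: "('o \<times> 'm) set \<Rightarrow> ('o, 'm) cat \<Rightarrow> ('o, 'm, 'o, 'm) func \<Rightarrow> bool" where
  "algebra_set Ob C T \<longleftrightarrow> (\<forall>A\<in>Ob. fst A \<in> Obj C \<and> snd A \<in> hom C (omap T (fst A)) (fst A))"

definition EM_obj :: "('o, 'm) cat \<Rightarrow> ('o, 'm, 'o, 'm) func \<Rightarrow> ('o \<Rightarrow> 'm) \<Rightarrow> ('o \<Rightarrow> 'm)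
     \<Rightarrow> ('o \<times> 'm) set" where
  "EM_obj D T \<eta> \<mu> = {(X, a). X \<in> Obj D \<and> a \<in> hom D (omap T X) X \<and>
     Comp D a (\<eta> X) = Id D X \<and> Comp D a (amap T a) = Comp D a (\<mu> X)}"

lemma Alg_cat_eq: "Alg_cat C T = algebra_cat {(X, a). X \<in> Obj C \<and> a \<in> hom C (omap T X) X} C T"
  by (simp add: Alg_cat_def algebra_cat_def Let_def)

lemma EM_cat_eq: "EM_cat D T \<eta> \<mu> = algebra_cat (EM_obj D T \<eta> \<mu>) D T"
  by (simp add: EM_cat_def EM_obj_def algebra_cat_def Let_def)

lemma EM_objD:
  "(Y, y) \<in> EM_obj D T \<eta> \<mu> \<Longrightarrow> Y \<in> Obj D \<and> y \<in> Arr D \<and> Dom D y = omap T Y \<and> Cod D y = Y \<and>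
    Comp D y (\<eta> Y) = Id D Y \<and> Comp D y (amap T y) = Comp D y (\<mu> Y)"
  by (simp add: EM_obj_def hom_def)

lemma algebra_cat_Obj [simp]: "Obj (algebra_cat Ob C T) = Ob"
  by (simp add: algebra_cat_def)
lemma algebra_cat_Arr_iff [simp]:
  "(A, h, B) \<in> Arr (algebra_cat Ob C T) \<longleftrightarrow>
    A \<in> Ob \<and> B \<in> Ob \<and> h \<in> hom C (fst A) (fst B) \<and> Comp C h (snd A) = Comp C (snd B) (amap T h)"
  by (simp add: algebra_cat_def)
lemma algebra_cat_Dom [simp]: "Dom (algebra_cat Ob C T) (A, h, B) = A"
  by (simp add: algebra_cat_def)
lemma algebra_cat_Cod [simp]: "Cod (algebra_cat Ob C T) (A, h, B) = B"
  by (simp add: algebra_cat_def)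
lemma algebra_cat_Id [simp]: "Id (algebra_cat Ob C T) A = (A, Id C (fst A), A)"
  by (simp add: algebra_cat_def)
lemma algebra_cat_Comp [simp]: "Comp (algebra_cat Ob C T) (B', g, E) (A, f, B) = (A, Comp C g f, E)"
  by (simp add: algebra_cat_def)

lemma algebra_set_Alg: "algebra_set {(X, a). X \<in> Obj C \<and> a \<in> hom C (omap T X) X} C T"
  by (auto simp: algebra_set_def)

lemma algebra_set_EM: "algebra_set (EM_obj D T \<eta> \<mu>) D T"
  by (auto simp: algebra_set_def EM_obj_def)

lemma algebra_setD:
  "algebra_set Ob C T \<Longrightarrow> A \<in> Ob \<Longrightarrow>
    fst A \<in> Obj C \<and> snd A \<in> Arr C \<and> Dom C (snd A) = omap T (fst A) \<and> Cod C (snd A) = fst A"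
  by (auto simp: algebra_set_def hom_def)

lemma algebra_hom_comp:
  assumes c: "category C" and T: "is_functor C C T" and ob: "algebra_set Ob C T"
    and A: "A \<in> Ob" and B: "B \<in> Ob" and E: "E \<in> Ob"
    and f: "f \<in> hom C (fst A) (fst B)" "Comp C f (snd A) = Comp C (snd B) (amap T f)"
    and g: "g \<in> hom C (fst B) (fst E)" "Comp C g (snd B) = Comp C (snd E) (amap T g)"
  shows "Comp C (Comp C g f) (snd A) = Comp C (snd E) (amap T (Comp C g f))"
proof -
  note a = algebra_setD[OF ob A] algebra_setD[OF ob B] algebra_setD[OF ob E]
  have "Comp C (Comp C g f) (snd A) = Comp C g (Comp C (snd B) (amap T f))"
    using a f g c by (simp add: cat_simps hom_def)
  also have "\<dots> = Comp C (snd E) (Comp C (amap T g) (amap T f))"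
    using a f g c T by (intro comp_reassoc_eq) (auto simp: cat_simps functor_simps hom_def)
  also have "\<dots> = Comp C (snd E) (amap T (Comp C g f))"
    using a f g c T by (simp add: cat_simps functor_simps hom_def)
  finally show ?thesis .
qed

lemma algebra_cat_category:
  assumes c: "category C" and T: "is_functor C C T" and ob: "algebra_set Ob C T"
  shows "category (algebra_cat Ob C T)"
  unfolding category_def
proof (intro conjI ballI impI)
  let ?A = "algebra_cat Ob C T"
  fix x assume "x \<in> Arr ?A"
  then obtain A h B where x: "x = (A, h, B)" and "A \<in> Ob" "B \<in> Ob" "h \<in> hom C (fst A) (fst B)"
    by (cases x) auto
  then show "Dom ?A x \<in> Obj ?A" "Cod ?A x \<in> Obj ?A" "Comp ?A (Id ?A (Cod ?A x)) x = x" "Comp ?A x (Id ?A (Dom ?A x)) = x"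
    using c by (simp_all add: hom_def cat_simps)
next
  let ?A = "algebra_cat Ob C T"
  fix A assume "A \<in> Obj ?A"
  then show "Id ?A A \<in> hom ?A A A"
    using algebra_setD[OF ob, of A] c T by (simp add: hom_def cat_simps functor_simps)
next
  let ?A = "algebra_cat Ob C T"
  fix x y assume "x \<in> Arr ?A" "y \<in> Arr ?A" "Cod ?A x = Dom ?A y"
  then obtain A f B g E where x: "x = (A, f, B)" "y = (B, g, E)"
    and f: "A \<in> Ob" "B \<in> Ob" "f \<in> hom C (fst A) (fst B)" "Comp C f (snd A) = Comp C (snd B) (amap T f)"
    and g: "E \<in> Ob" "g \<in> hom C (fst B) (fst E)" "Comp C g (snd B) = Comp C (snd E) (amap T g)"
    by (cases x, cases y) auto
  then show "Comp ?A y x \<in> hom ?A (Dom ?A x) (Cod ?A y)"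
    using algebra_hom_comp[OF c T ob f(1,2) g(1) f(3,4) g(2,3)] c by (simp add: hom_def cat_simps)
next
  let ?A = "algebra_cat Ob C T"
  fix x y z assume "x \<in> Arr ?A" "y \<in> Arr ?A" "z \<in> Arr ?A" "Cod ?A x = Dom ?A y" "Cod ?A y = Dom ?A z"
  then obtain A f B g E h H where x: "x = (A, f, B)" "y = (B, g, E)" "z = (E, h, H)"
    and "f \<in> hom C (fst A) (fst B)" "g \<in> hom C (fst B) (fst E)" "h \<in> hom C (fst E) (fst H)"
    by (cases x, cases y, cases z) auto
  then show "Comp ?A z (Comp ?A y x) = Comp ?A (Comp ?A z y) x"
    using c by (simp add: hom_def cat_simps)
qed

lemma algebra_cat_isoI:
  assumes c: "category C" and T: "is_functor C C T" and ob: "algebra_set Ob C T"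
    and x: "(A, h, B) \<in> Arr (algebra_cat Ob C T)" and i: "iso C h"
  shows "iso (algebra_cat Ob C T) (A, h, B)"
proof -
  note hi = iso_inv_arr[OF i]
  have A: "A \<in> Ob" "B \<in> Ob" and h: "h \<in> hom C (fst A) (fst B)" and e: "Comp C h (snd A) = Comp C (snd B) (amap T h)"
    using x by auto
  note a = algebra_setD[OF ob A(1)] algebra_setD[OF ob A(2)]
  have "Comp C (inv_arr C h) (snd B) = Comp C (inv_arr C h) (Comp C (snd B) (Comp C (amap T h) (amap T (inv_arr C h))))"
    using hi h a c T i by (simp add: cat_simps functor_simps hom_def functor_comp[symmetric])
  also have "\<dots> = Comp C (inv_arr C h) (Comp C h (Comp C (snd A) (amap T (inv_arr C h))))"
    using hi h a c T e by (intro arg_cong[where f="Comp C (inv_arr C h)"] comp_reassoc_eq) (auto simp: cat_simps functor_simps hom_def)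
  also have "\<dots> = Comp C (snd A) (amap T (inv_arr C h))"
    using hi h a c T i by (simp add: cat_simps functor_simps hom_def inv_comp_cancel)
  finally have "(B, inv_arr C h, A) \<in> Arr (algebra_cat Ob C T)" using A hi h by (simp add: hom_def)
  then show ?thesis
    using x hi h c by (intro isoI[of _ _ "(B, inv_arr C h, A)"]) (auto simp: hom_def)
qed

lemma forget_omap [simp]: "omap (forget C T) A = fst A" by (simp add: forget_def)
lemma forget_amap [simp]: "amap (forget C T) (A, h, B) = h" by (simp add: forget_def)

lemma forget_functor:
  assumes c: "category C" and T: "is_functor C C T" and ob: "algebra_set Ob C T"
  shows "is_functor (algebra_cat Ob C T) C (forget C T)"
  unfolding is_functor_def
proof (intro conjI ballI impI c algebra_cat_category[OF c T ob])
  fix A assume "A \<in> Obj (algebra_cat Ob C T)"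
  then show "omap (forget C T) A \<in> Obj C" using algebra_setD[OF ob] by simp
next
  fix A assume "A \<in> Obj (algebra_cat Ob C T)"
  then show "amap (forget C T) (Id (algebra_cat Ob C T) A) = Id C (omap (forget C T) A)" by simp
next
  fix x assume "x \<in> Arr (algebra_cat Ob C T)"
  then show "amap (forget C T) x \<in> hom C (omap (forget C T) (Dom (algebra_cat Ob C T) x)) (omap (forget C T) (Cod (algebra_cat Ob C T) x))"
    by (cases x) auto
next
  fix x y assume "x \<in> Arr (algebra_cat Ob C T)" "y \<in> Arr (algebra_cat Ob C T)"
    "Cod (algebra_cat Ob C T) x = Dom (algebra_cat Ob C T) y"
  then show "amap (forget C T) (Comp (algebra_cat Ob C T) y x) = Comp C (amap (forget C T) y) (amap (forget C T) x)"
    by (cases x, cases y) auto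
qed

context
  fixes C :: "('oc, 'mc) cat" and D :: "('od, 'md) cat" and F G \<eta> \<epsilon>
  assumes adj: "adjunction C D F G \<eta> \<epsilon>"
begin

lemma adj_F: "is_functor D C F" using adj unfolding adjunction_def by blast
lemma adj_G: "is_functor C D G" using adj unfolding adjunction_def by blast
lemma adj_eta: "nat_trans D D (id_functor D) (comp_functor G F) \<eta>" using adj unfolding adjunction_def by blast
lemma adj_eps: "nat_trans C C (comp_functor F G) (id_functor C) \<epsilon>" using adj unfolding adjunction_def by blast
lemma adj_triangle_F: "X \<in> Obj D \<Longrightarrow> Comp C (\<epsilon> (omap F X)) (amap F (\<eta> X)) = Id C (omap F X)"
  using adj unfolding adjunction_def by blast
lemma adj_triangle_G: "Y \<in> Obj C \<Longrightarrow> Comp D (amap G (\<epsilon> Y)) (\<eta> (omap G Y)) = Id D (omap G Y)"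
  using adj unfolding adjunction_def by blast
lemma adj_C: "category C" using functor_dom_category[OF adj_G] .
lemma adj_D: "category D" using functor_cod_category[OF adj_G] .
lemma eta_arr: "X \<in> Obj D \<Longrightarrow> \<eta> X \<in> Arr D" using nat_trans_arr[OF adj_eta] .
lemma eta_dom: "X \<in> Obj D \<Longrightarrow> Dom D (\<eta> X) = X" using nat_trans_dom[OF adj_eta] by simp
lemma eta_cod: "X \<in> Obj D \<Longrightarrow> Cod D (\<eta> X) = omap G (omap F X)" using nat_trans_cod[OF adj_eta] by simp
lemma eps_arr: "X \<in> Obj C \<Longrightarrow> \<epsilon> X \<in> Arr C" using nat_trans_arr[OF adj_eps] .
lemma eps_dom: "X \<in> Obj C \<Longrightarrow> Dom C (\<epsilon> X) = omap F (omap G X)" using nat_trans_dom[OF adj_eps] by simp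
lemma eps_cod: "X \<in> Obj C \<Longrightarrow> Cod C (\<epsilon> X) = X" using nat_trans_cod[OF adj_eps] by simp
lemma eta_nat: "f \<in> Arr D \<Longrightarrow> Comp D (\<eta> (Cod D f)) f = Comp D (amap G (amap F f)) (\<eta> (Dom D f))"
  using nat_trans_natural[OF adj_eta] by simp
lemma eps_nat: "f \<in> Arr C \<Longrightarrow> Comp C (\<epsilon> (Cod C f)) (amap F (amap G f)) = Comp C f (\<epsilon> (Dom C f))"
  using nat_trans_natural[OF adj_eps] by simp

end

lemmas adj_simps = adj_C adj_D adj_F adj_G eta_arr eta_dom eta_cod eps_arr eps_dom eps_cod

abbreviation EM_of_adj where
  "EM_of_adj D F G \<eta> \<epsilon> \<equiv> EM_cat D (comp_functor G F) \<eta> (adj_mult F G \<epsilon>)"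

abbreviation EM_algebras where
  "EM_algebras D F G \<eta> \<epsilon> \<equiv> EM_obj D (comp_functor G F) \<eta> (adj_mult F G \<epsilon>)"

lemma comparison_omap [simp]: "omap (comparison C G \<epsilon>) X = (omap G X, amap G (\<epsilon> X))"
  by (simp add: comparison_def Let_def)

lemma comparison_amap [simp]:
  "amap (comparison C G \<epsilon>) f =
    ((omap G (Dom C f), amap G (\<epsilon> (Dom C f))), amap G f, (omap G (Cod C f), amap G (\<epsilon> (Cod C f))))"
  by (simp add: comparison_def Let_def)

lemma comparison_obj:
  assumes adj: "adjunction C D F G \<eta> \<epsilon>" and X: "X \<in> Obj C"
  shows "(omap G X, amap G (\<epsilon> X)) \<in> EM_algebras D F G \<eta> \<epsilon>"
proof -
  note A = adj_simps[OF adj] and G = adj_G[OF adj] and F = adj_F[OF adj]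
  have "Comp D (amap G (\<epsilon> X)) (amap G (amap F (amap G (\<epsilon> X)))) = amap G (Comp C (\<epsilon> X) (amap F (amap G (\<epsilon> X))))"
    using A X by (simp add: functor_simps cat_simps)
  also have "\<dots> = amap G (Comp C (\<epsilon> X) (\<epsilon> (omap F (omap G X))))"
    using eps_nat[OF adj, of "\<epsilon> X"] A X by (simp add: functor_simps cat_simps)
  also have "\<dots> = Comp D (amap G (\<epsilon> X)) (amap G (\<epsilon> (omap F (omap G X))))"
    using A X by (simp add: functor_simps cat_simps)
  finally show ?thesis using A X adj_triangle_G[OF adj X]
    by (simp add: EM_obj_def hom_def functor_simps cat_simps adj_mult_def)
qed

lemma comparison_arr:
  assumes adj: "adjunction C D F G \<eta> \<epsilon>" and f: "f \<in> Arr C"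
  shows "amap (comparison C G \<epsilon>) f \<in> Arr (EM_of_adj D F G \<eta> \<epsilon>)"
proof -
  note A = adj_simps[OF adj]
  have "Comp D (amap G f) (amap G (\<epsilon> (Dom C f))) = amap G (Comp C f (\<epsilon> (Dom C f)))"
    using A f by (simp add: functor_simps cat_simps)
  also have "\<dots> = amap G (Comp C (\<epsilon> (Cod C f)) (amap F (amap G f)))" using eps_nat[OF adj f] by simp
  also have "\<dots> = Comp D (amap G (\<epsilon> (Cod C f))) (amap G (amap F (amap G f)))"
    using A f by (simp add: functor_simps cat_simps)
  finally show ?thesis
    unfolding EM_cat_eq using f A comparison_obj[OF adj] by (simp add: hom_def functor_simps cat_simps)
qed

lemma comparison_functor:
  assumes adj: "adjunction C D F G \<eta> \<epsilon>"
  shows "is_functor C (EM_of_adj D F G \<eta> \<epsilon>) (comparison C G \<epsilon>)"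
  unfolding is_functor_def
proof (intro conjI ballI impI adj_C[OF adj])
  note A = adj_simps[OF adj]
  show "category (EM_of_adj D F G \<eta> \<epsilon>)"
    unfolding EM_cat_eq by (rule algebra_cat_category[OF adj_D[OF adj] is_functor_comp[OF adj_F[OF adj] adj_G[OF adj]] algebra_set_EM])
  fix X assume "X \<in> Obj C"
  then show "omap (comparison C G \<epsilon>) X \<in> Obj (EM_of_adj D F G \<eta> \<epsilon>)"
    "amap (comparison C G \<epsilon>) (Id C X) = Id (EM_of_adj D F G \<eta> \<epsilon>) (omap (comparison C G \<epsilon>) X)"
    unfolding EM_cat_eq using comparison_obj[OF adj] A by (simp_all add: functor_simps cat_simps)
next
  fix f assume "f \<in> Arr C"
  then show "amap (comparison C G \<epsilon>) f \<in> hom (EM_of_adj D F G \<eta> \<epsilon>)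
      (omap (comparison C G \<epsilon>) (Dom C f)) (omap (comparison C G \<epsilon>) (Cod C f))"
    using comparison_arr[OF adj] unfolding EM_cat_eq by (simp add: hom_def)
next
  fix f g assume "f \<in> Arr C" "g \<in> Arr C" "Cod C f = Dom C g"
  then show "amap (comparison C G \<epsilon>) (Comp C g f) =
      Comp (EM_of_adj D F G \<eta> \<epsilon>) (amap (comparison C G \<epsilon>) g) (amap (comparison C G \<epsilon>) f)"
    unfolding EM_cat_eq using adj_simps[OF adj] by (simp add: functor_simps cat_simps)
qed

definition faithful :: "('o1, 'm1) cat \<Rightarrow> ('o2, 'm2) cat \<Rightarrow> ('o1, 'm1, 'o2, 'm2) func \<Rightarrow> bool" where
  "faithful A B K \<longleftrightarrow> (\<forall>f\<in>Arr A. \<forall>g\<in>Arr A. Dom A f = Dom A g \<longrightarrow> Cod A f = Cod A g \<longrightarrow>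
     amap K f = amap K g \<longrightarrow> f = g)"

definition full :: "('o1, 'm1) cat \<Rightarrow> ('o2, 'm2) cat \<Rightarrow> ('o1, 'm1, 'o2, 'm2) func \<Rightarrow> bool" where
  "full A B K \<longleftrightarrow> (\<forall>X\<in>Obj A. \<forall>Y\<in>Obj A. \<forall>w\<in>hom B (omap K X) (omap K Y). \<exists>f\<in>hom A X Y. amap K f = w)"

definition essentially_surj :: "('o1, 'm1) cat \<Rightarrow> ('o2, 'm2) cat \<Rightarrow> ('o1, 'm1, 'o2, 'm2) func \<Rightarrow> bool" where
  "essentially_surj A B K \<longleftrightarrow> (\<forall>W\<in>Obj B. \<exists>X\<in>Obj A. \<exists>i. i \<in> hom B (omap K X) W \<and> iso B i)"

lemma faithfulD:
  "faithful A B K \<Longrightarrow> f \<in> Arr A \<Longrightarrow> g \<in> Arr A \<Longrightarrow> Dom A f = Dom A g \<Longrightarrow> Cod A f = Cod A g \<Longrightarrow>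
    amap K f = amap K g \<Longrightarrow> f = g"
  unfolding faithful_def by blast

lemma fullD:
  "full A B K \<Longrightarrow> X \<in> Obj A \<Longrightarrow> Y \<in> Obj A \<Longrightarrow> w \<in> hom B (omap K X) (omap K Y) \<Longrightarrow>
    \<exists>f\<in>hom A X Y. amap K f = w"
  unfolding full_def by blast

lemma unit_iso_faithful:
  assumes a: "nat_iso A A (id_functor A) (comp_functor L K) \<alpha>"
  shows "faithful A B K"
  unfolding faithful_def
proof (intro ballI impI)
  have at: "nat_trans A A (id_functor A) (comp_functor L K) \<alpha>" and ai: "\<And>X. X \<in> Obj A \<Longrightarrow> iso A (\<alpha> X)"
    using a unfolding nat_iso_def by auto
  have cA: "category A" using at unfolding nat_trans_def is_functor_def by blast
  fix f g assume f: "f \<in> Arr A" "g \<in> Arr A" "Dom A f = Dom A g" "Cod A f = Cod A g" "amap K f = amap K g"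
  have Y: "Cod A f \<in> Obj A" using f(1) cA by (simp add: cat_simps)
  have "Comp A (\<alpha> (Cod A f)) f = Comp A (\<alpha> (Cod A f)) g"
    using nat_trans_natural[OF at, of f] nat_trans_natural[OF at, of g] f by simp
  moreover have "Dom A (\<alpha> (Cod A f)) = Cod A f" using nat_trans_dom[OF at Y] by simp
  ultimately show "f = g" using iso_mono[OF cA ai[OF Y] f(1) f(2)] f(4) by metis
qed

lemma counit_iso_faithful:
  assumes b: "nat_iso B B (comp_functor K L) (id_functor B) \<beta>"
  shows "faithful B A L"
  unfolding faithful_def
proof (intro ballI impI)
  have bt: "nat_trans B B (comp_functor K L) (id_functor B) \<beta>" and bi: "\<And>X. X \<in> Obj B \<Longrightarrow> iso B (\<beta> X)"
    using b unfolding nat_iso_def by auto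
  have cB: "category B" using bt unfolding nat_trans_def is_functor_def by blast
  fix f g assume f: "f \<in> Arr B" "g \<in> Arr B" "Dom B f = Dom B g" "Cod B f = Cod B g" "amap L f = amap L g"
  have X: "Dom B f \<in> Obj B" using f(1) cB by (simp add: cat_simps)
  have "Comp B f (\<beta> (Dom B f)) = Comp B g (\<beta> (Dom B f))"
    using nat_trans_natural[OF bt, of f] nat_trans_natural[OF bt, of g] f by simp
  moreover have "Cod B (\<beta> (Dom B f)) = Dom B f" using nat_trans_cod[OF bt X] by simp
  ultimately show "f = g" using iso_epi[OF cB bi[OF X] f(1) f(2)] f(3) by metis
qed

lemma unit_iso_full:
  assumes K: "is_functor A B K" and L: "is_functor B A L" and fL: "faithful B A L"
    and a: "nat_iso A A (id_functor A) (comp_functor L K) \<alpha>"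
  shows "full A B K"
  unfolding full_def
proof (intro ballI)
  have at: "nat_trans A A (id_functor A) (comp_functor L K) \<alpha>" and ai: "\<And>X. X \<in> Obj A \<Longrightarrow> iso A (\<alpha> X)"
    using a unfolding nat_iso_def by auto
  note aa = nat_trans_arr[OF at] nat_trans_dom[OF at] nat_trans_cod[OF at]
  have cA: "category A" using K by (rule functor_dom_category)
  fix X Y w assume X: "X \<in> Obj A" and Y: "Y \<in> Obj A" and w: "w \<in> hom B (omap K X) (omap K Y)"
  note iY = iso_inv_arr[OF ai[OF Y]]
  let ?f = "Comp A (inv_arr A (\<alpha> Y)) (Comp A (amap L w) (\<alpha> X))"
  have f: "?f \<in> hom A X Y" using iY aa X Y w L cA by (simp add: hom_def cat_simps functor_simps)
  have "Comp A (amap L (amap K ?f)) (\<alpha> X) = Comp A (\<alpha> Y) ?f"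
    using nat_trans_natural[OF at, of ?f] f by (simp add: hom_def)
  also have "\<dots> = Comp A (amap L w) (\<alpha> X)"
    using iY aa X Y w L cA ai[OF Y] by (simp add: hom_def cat_simps functor_simps comp_inv_cancel)
  finally have "amap L (amap K ?f) = amap L w"
    using iso_epi[OF cA ai[OF X], of "amap L (amap K ?f)" "amap L w"] f w aa X Y L K cA
    by (simp add: hom_def cat_simps functor_simps)
  then have "amap K ?f = w" using faithfulD[OF fL, of "amap K ?f" w] f w K by (simp add: hom_def functor_simps)
  then show "\<exists>f\<in>hom A X Y. amap K f = w" using f by blast
qed

lemma equivalenceD:
  assumes "equivalence A B K"
  shows "faithful A B K" "full A B K" "essentially_surj A B K"
proof -
  obtain L \<alpha> \<beta> where K: "is_functor A B K" and L: "is_functor B A L"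
    and a: "nat_iso A A (id_functor A) (comp_functor L K) \<alpha>" and b: "nat_iso B B (comp_functor K L) (id_functor B) \<beta>"
    using assms unfolding equivalence_def by blast
  show "faithful A B K" using a by (rule unit_iso_faithful)
  show "full A B K" using K L counit_iso_faithful[OF b] a by (rule unit_iso_full)
  have bt: "nat_trans B B (comp_functor K L) (id_functor B) \<beta>" and bi: "\<And>X. X \<in> Obj B \<Longrightarrow> iso B (\<beta> X)"
    using b unfolding nat_iso_def by auto
  show "essentially_surj A B K" unfolding essentially_surj_def
  proof
    fix W assume W: "W \<in> Obj B"
    then show "\<exists>X\<in>Obj A. \<exists>i. i \<in> hom B (omap K X) W \<and> iso B i"
      using nat_trans_arr[OF bt] nat_trans_dom[OF bt] nat_trans_cod[OF bt] functor_obj[OF L] bi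
      by (intro bexI[of _ "omap L W"] exI[of _ "\<beta> W"]) (auto simp: hom_def)
  qed
qed

text \<open>A fully faithful functor \<open>K\<close> together with chosen isomorphisms \<open>i W : K (Z W) \<rightarrow> W\<close>
  determines a pseudo-inverse \<open>L\<close> with \<open>L W = Z W\<close>, by transporting arrows along the \<open>i W\<close>.\<close>

locale ff_transport =
  fixes A :: "('oa, 'ma) cat" and B :: "('ob, 'mb) cat" and K :: "('oa, 'ma, 'ob, 'mb) func"
    and Z :: "'ob \<Rightarrow> 'oa" and i :: "'ob \<Rightarrow> 'mb"
  assumes K: "is_functor A B K" and faithful: "faithful A B K" and full: "full A B K"
    and Z: "\<And>W. W \<in> Obj B \<Longrightarrow> Z W \<in> Obj A"
    and i: "\<And>W. W \<in> Obj B \<Longrightarrow> i W \<in> hom B (omap K (Z W)) W"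
    and i_iso: "\<And>W. W \<in> Obj B \<Longrightarrow> iso B (i W)"
begin

definition transport :: "'mb \<Rightarrow> 'mb" where
  "transport w = Comp B (inv_arr B (i (Cod B w))) (Comp B w (i (Dom B w)))"

definition pseudo_inverse :: "('ob, 'mb, 'oa, 'ma) func" where
  "pseudo_inverse = \<lparr>omap = Z,
     amap = (\<lambda>w. SOME f. f \<in> hom A (Z (Dom B w)) (Z (Cod B w)) \<and> amap K f = transport w)\<rparr>"

lemma pseudo_inverse_omap [simp]: "omap pseudo_inverse W = Z W"
  by (simp add: pseudo_inverse_def)

definition unit_arr :: "'oa \<Rightarrow> 'ma" where
  "unit_arr X = (SOME f. f \<in> hom A X (Z (omap K X)) \<and> amap K f = inv_arr B (i (omap K X)))"

lemma cats: "category A" "category B"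
  using K by (auto dest: functor_dom_category functor_cod_category)

lemma i_arrs:
  assumes "W \<in> Obj B"
  shows "i W \<in> Arr B" "Dom B (i W) = omap K (Z W)" "Cod B (i W) = W"
    "inv_arr B (i W) \<in> Arr B" "Dom B (inv_arr B (i W)) = W" "Cod B (inv_arr B (i W)) = omap K (Z W)"
    "Comp B (inv_arr B (i W)) (i W) = Id B (omap K (Z W))" "Comp B (i W) (inv_arr B (i W)) = Id B W"
  using i[OF assms] iso_inv_arr[OF i_iso[OF assms]] by (auto simp: hom_def)

lemma transport_hom: "w \<in> Arr B \<Longrightarrow> transport w \<in> hom B (omap K (Z (Dom B w))) (omap K (Z (Cod B w)))"
  using cats i_arrs unfolding transport_def by (simp add: cat_simps hom_def)

lemma pseudo_inverse_amap:
  assumes w: "w \<in> Arr B"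
  shows "amap pseudo_inverse w \<in> hom A (Z (Dom B w)) (Z (Cod B w)) \<and> amap K (amap pseudo_inverse w) = transport w"
proof -
  have "\<exists>f. f \<in> hom A (Z (Dom B w)) (Z (Cod B w)) \<and> amap K f = transport w"
    using fullD[OF full _ _ transport_hom[OF w]] Z w cats by (meson cat_simps)
  then show ?thesis unfolding pseudo_inverse_def by (simp, rule someI_ex)
qed

lemma pseudo_inverse_unique:
  "w \<in> Arr B \<Longrightarrow> f \<in> hom A (Z (Dom B w)) (Z (Cod B w)) \<Longrightarrow> amap K f = transport w \<Longrightarrow> f = amap pseudo_inverse w"
  using faithfulD[OF faithful, of f "amap pseudo_inverse w"] pseudo_inverse_amap[of w] by (auto simp: hom_def)

lemma pseudo_inverse_functor: "is_functor B A pseudo_inverse"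
  unfolding is_functor_def
proof (intro conjI ballI impI cats)
  fix W assume W: "W \<in> Obj B"
  then show "omap pseudo_inverse W \<in> Obj A" using Z by simp
  have "amap K (Id A (Z W)) = transport (Id B W)"
    unfolding transport_def using W i_arrs[OF W] cats K Z by (simp add: cat_simps functor_simps)
  then have "Id A (Z W) = amap pseudo_inverse (Id B W)"
    by (intro pseudo_inverse_unique) (use W cats Z in \<open>simp_all add: cat_simps hom_def\<close>)
  then show "amap pseudo_inverse (Id B W) = Id A (omap pseudo_inverse W)" by simp
next
  fix w assume "w \<in> Arr B"
  then show "amap pseudo_inverse w \<in> hom A (omap pseudo_inverse (Dom B w)) (omap pseudo_inverse (Cod B w))"
    using pseudo_inverse_amap by simp
next
  fix f g assume fg: "f \<in> Arr B" "g \<in> Arr B" "Cod B f = Dom B g"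
  note Lf = pseudo_inverse_amap[OF fg(1)] and Lg = pseudo_inverse_amap[OF fg(2)]
  have "amap K (Comp A (amap pseudo_inverse g) (amap pseudo_inverse f)) = Comp B (transport g) (transport f)"
    using Lf Lg fg K by (simp add: functor_simps hom_def)
  also have "\<dots> = transport (Comp B g f)"
    unfolding transport_def using fg i_arrs cats i_iso by (simp add: cat_simps comp_inv_cancel)
  finally have "Comp A (amap pseudo_inverse g) (amap pseudo_inverse f) = amap pseudo_inverse (Comp B g f)"
    by (intro pseudo_inverse_unique) (use fg Lf Lg cats in \<open>simp_all add: cat_simps hom_def\<close>)
  then show "amap pseudo_inverse (Comp B g f) = Comp A (amap pseudo_inverse g) (amap pseudo_inverse f)" ..
qed

lemma counit_nat_iso: "nat_iso B B (comp_functor K pseudo_inverse) (id_functor B) i"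
  unfolding nat_iso_def nat_trans_def
proof (intro conjI ballI is_functor_id cats is_functor_comp[OF pseudo_inverse_functor K] i_iso)
  fix W assume "W \<in> Obj B"
  then show "i W \<in> hom B (omap (comp_functor K pseudo_inverse) W) (omap (id_functor B) W)"
    using i by simp
next
  fix w assume w: "w \<in> Arr B"
  show "Comp B (i (Cod B w)) (amap (comp_functor K pseudo_inverse) w) = Comp B (amap (id_functor B) w) (i (Dom B w))"
    using pseudo_inverse_amap[OF w] w i_arrs cats i_iso unfolding transport_def
    by (simp add: cat_simps comp_inv_cancel)
qed

lemma unit_arr:
  assumes X: "X \<in> Obj A"
  shows "unit_arr X \<in> hom A X (Z (omap K X)) \<and> amap K (unit_arr X) = inv_arr B (i (omap K X))"
proof -
  have "\<exists>f. f \<in> hom A X (Z (omap K X)) \<and> amap K f = inv_arr B (i (omap K X))"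
    using fullD[OF full X Z, of "omap K X" "inv_arr B (i (omap K X))"] i_arrs X K by (auto simp: functor_simps hom_def)
  then show ?thesis unfolding unit_arr_def by (rule someI_ex)
qed

lemma unit_arr_iso:
  assumes X: "X \<in> Obj A"
  shows "iso A (unit_arr X)"
proof -
  have KX: "omap K X \<in> Obj B" using K X by (simp add: functor_simps)
  obtain g where g: "g \<in> hom A (Z (omap K X)) X" "amap K g = i (omap K X)"
    using fullD[OF full Z[OF KX] X, of "i (omap K X)"] i_arrs KX by (auto simp: hom_def)
  have "Comp A g (unit_arr X) = Id A X"
    using faithfulD[OF faithful, of "Comp A g (unit_arr X)" "Id A X"] g unit_arr[OF X] cats K X i_arrs[OF KX]
    by (simp add: hom_def cat_simps functor_simps)
  moreover have "Comp A (unit_arr X) g = Id A (Z (omap K X))"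
    using faithfulD[OF faithful, of "Comp A (unit_arr X) g" "Id A (Z (omap K X))"] g unit_arr[OF X] cats K X
      i_arrs[OF KX] Z[OF KX]
    by (simp add: hom_def cat_simps functor_simps)
  ultimately show ?thesis using g unit_arr[OF X] by (intro isoI[of _ _ g]) (auto simp: hom_def)
qed

lemma unit_nat_iso: "nat_iso A A (id_functor A) (comp_functor pseudo_inverse K) unit_arr"
  unfolding nat_iso_def nat_trans_def
proof (intro conjI ballI is_functor_id cats is_functor_comp[OF K pseudo_inverse_functor] unit_arr_iso)
  fix X assume "X \<in> Obj A"
  then show "unit_arr X \<in> hom A (omap (id_functor A) X) (omap (comp_functor pseudo_inverse K) X)"
    using unit_arr by simp
next
  fix f assume f: "f \<in> Arr A"
  have d: "Dom A f \<in> Obj A" "Cod A f \<in> Obj A" using f cats by (simp_all add: cat_simps)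
  have Kf: "amap K f \<in> Arr B" "omap K (Dom A f) \<in> Obj B" "omap K (Cod A f) \<in> Obj B"
    using f K d by (simp_all add: functor_simps)
  note u1 = unit_arr[OF d(1)] and u2 = unit_arr[OF d(2)] and tK = pseudo_inverse_amap[OF Kf(1)]
  have "amap K (Comp A (unit_arr (Cod A f)) f) = amap K (Comp A (amap pseudo_inverse (amap K f)) (unit_arr (Dom A f)))"
    using f K u1 u2 tK Kf cats i_arrs i_iso unfolding transport_def
    by (simp add: functor_simps cat_simps hom_def inv_comp_cancel)
  then show "Comp A (unit_arr (Cod A f)) (amap (id_functor A) f) = Comp A (amap (comp_functor pseudo_inverse K) f) (unit_arr (Dom A f))"
    using faithfulD[OF faithful, of "Comp A (unit_arr (Cod A f)) f" "Comp A (amap pseudo_inverse (amap K f)) (unit_arr (Dom A f))"]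
      f K u1 u2 tK Kf cats by (simp add: functor_simps cat_simps hom_def)
qed

end

lemma ff_essentially_surj_equivalence:
  assumes K: "is_functor A B K" and fK: "faithful A B K" and uK: "full A B K" and eK: "essentially_surj A B K"
  shows "equivalence A B K"
proof -
  have "\<forall>W\<in>Obj B. \<exists>X i. X \<in> Obj A \<and> i \<in> hom B (omap K X) W \<and> iso B i"
    using eK unfolding essentially_surj_def by blast
  then obtain Z i where "\<And>W. W \<in> Obj B \<Longrightarrow> Z W \<in> Obj A \<and> i W \<in> hom B (omap K (Z W)) W \<and> iso B (i W)"
    by metis
  then interpret ff_transport A B K Z i using K fK uK by unfold_locales auto
  show ?thesis unfolding equivalence_def
    using K pseudo_inverse_functor unit_nat_iso counit_nat_iso by blast
qed

lemma ff_reflects_iso: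
  assumes K: "is_functor A B K" and fK: "faithful A B K" and uK: "full A B K"
    and f: "f \<in> Arr A" and i: "iso B (amap K f)"
  shows "iso A f"
proof -
  have cA: "category A" using K by (rule functor_dom_category)
  note ip = iso_inv_arr[OF i]
  have d: "Dom A f \<in> Obj A" "Cod A f \<in> Obj A" using f cA by (simp_all add: cat_simps)
  obtain g where g: "g \<in> hom A (Cod A f) (Dom A f)" "amap K g = inv_arr B (amap K f)"
    using fullD[OF uK d(2) d(1), of "inv_arr B (amap K f)"] ip f K by (auto simp: hom_def functor_simps)
  have "Comp A g f = Id A (Dom A f)"
    using faithfulD[OF fK, of "Comp A g f" "Id A (Dom A f)"] g ip f K cA d by (simp add: hom_def functor_simps cat_simps)
  moreover have "Comp A f g = Id A (Cod A f)"
    using faithfulD[OF fK, of "Comp A f g" "Id A (Cod A f)"] g ip f K cA d by (simp add: hom_def functor_simps cat_simps)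
  ultimately show ?thesis using f g by (intro isoI[of _ _ g]) (auto simp: hom_def)
qed

lemma ff_reflects_coequalizer:
  assumes K: "is_functor A B K" and fK: "faithful A B K" and uK: "full A B K"
    and f: "f \<in> Arr A" and g: "g \<in> Arr A" and fg: "Dom A f = Dom A g" "Cod A f = Cod A g"
    and q: "q \<in> Arr A" "Dom A q = Cod A f"
    and Kq: "coequalizer B (amap K f) (amap K g) (amap K q)"
  shows "coequalizer A f g q"
proof -
  have cA: "category A" and cB: "category B" using K by (auto dest: functor_dom_category functor_cod_category)
  note ka = coequalizerD[OF Kq]
  have qfg: "Comp A q f = Comp A q g"
    using faithfulD[OF fK, of "Comp A q f" "Comp A q g"] f g fg q ka K cA by (simp add: cat_simps functor_simps)
  show ?thesis unfolding coequalizer_def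
  proof (intro conjI ballI impI f g fg q qfg)
    fix h assume h: "h \<in> Arr A" "Dom A h = Cod A f \<and> Comp A h f = Comp A h g"
    have "Comp B (amap K h) (amap K f) = Comp B (amap K h) (amap K g)"
      using h f g fg K by (metis functor_comp)
    then obtain u' where u': "u' \<in> Arr B" "Dom B u' = Cod B (amap K q)" "Cod B u' = Cod B (amap K h)"
      "Comp B u' (amap K q) = amap K h"
      using coequalizer_factor[OF Kq, of "amap K h"] h f K by (auto simp: functor_simps)
    have d: "Cod A q \<in> Obj A" "Cod A h \<in> Obj A" using q h cA by (simp_all add: cat_simps)
    obtain u where u: "u \<in> hom A (Cod A q) (Cod A h)" "amap K u = u'"
      using fullD[OF uK d, of u'] u' q h K by (auto simp: hom_def functor_simps)
    have uq: "Comp A u q = h"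
      using faithfulD[OF fK, of "Comp A u q" h] u u' q h K cA fg by (auto simp: hom_def functor_simps cat_simps)
    show "\<exists>!u. u \<in> hom A (Cod A q) (Cod A h) \<and> Comp A u q = h"
    proof (intro ex1I[of _ u] conjI u(1) uq)
      fix v assume v: "v \<in> hom A (Cod A q) (Cod A h) \<and> Comp A v q = h"
      have "amap K v = amap K u"
      proof (rule coequalizer_epi[OF cB Kq])
        show "Comp B (amap K v) (amap K q) = Comp B (amap K u) (amap K q)"
          using v uq u(1) q by (simp add: hom_def functor_comp[OF K, symmetric])
      qed (use v u q K in \<open>auto simp: hom_def functor_simps\<close>)
      then show "v = u" using faithfulD[OF fK, of v u] u v by (auto simp: hom_def)
    qed
  qed
qed

lemma EM_algebra_split_fork:
  assumes adj: "adjunction C D F G \<eta> \<epsilon>" and W: "(Y, y) \<in> EM_algebras D F G \<eta> \<epsilon>"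
  shows "split_fork D (amap G (amap F y)) (amap G (\<epsilon> (omap F Y))) y (\<eta> Y) (\<eta> (omap G (omap F Y)))"
proof -
  note A = adj_simps[OF adj] and w = EM_objD[OF W]
  have FY: "omap F Y \<in> Obj C" using w A by (simp add: functor_simps)
  have "Comp D (amap G (amap F y)) (\<eta> (omap G (omap F Y))) = Comp D (\<eta> Y) y"
    using eta_nat[OF adj, of y] w by simp
  moreover have "Comp D (amap G (\<epsilon> (omap F Y))) (\<eta> (omap G (omap F Y))) = Id D (omap G (omap F Y))"
    using adj_triangle_G[OF adj FY] .
  moreover have "Comp D y (amap G (amap F y)) = Comp D y (amap G (\<epsilon> (omap F Y)))"
    using w by (simp add: adj_mult_def)
  ultimately show ?thesis unfolding split_fork_def using w A FY
    by (intro exI[of _ "omap G (omap F (omap G (omap F Y)))"] exI[of _ "omap G (omap F Y)"] exI[of _ Y])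
      (auto simp: hom_def functor_simps)
qed

lemma EM_algebra_coequalizer:
  assumes adj: "adjunction C D F G \<eta> \<epsilon>" and W: "(Y, y) \<in> EM_algebras D F G \<eta> \<epsilon>"
  shows "coequalizer D (amap G (amap F y)) (amap G (\<epsilon> (omap F Y))) y"
  using split_coequalizer[OF adj_D[OF adj] EM_algebra_split_fork[OF adj W]] .

lemma EM_algebra_reflexive_pair:
  assumes adj: "adjunction C D F G \<eta> \<epsilon>" and W: "(Y, y) \<in> EM_algebras D F G \<eta> \<epsilon>"
  shows "reflexive_pair C (amap F y) (\<epsilon> (omap F Y))"
proof -
  note A = adj_simps[OF adj] and w = EM_objD[OF W]
  have Y: "Y \<in> Obj D" using w by blast
  have FY: "omap F Y \<in> Obj C" using Y A by (simp add: functor_simps)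
  have "Comp C (amap F y) (amap F (\<eta> Y)) = Id C (omap F Y)"
    using functor_comp_eq_id[OF adj_F[OF adj], of "\<eta> Y" y Y] w A by simp
  moreover have "Comp C (\<epsilon> (omap F Y)) (amap F (\<eta> Y)) = Id C (omap F Y)"
    using adj_triangle_F[OF adj Y] .
  ultimately show ?thesis unfolding reflexive_pair_def using w A FY
    by (intro conjI bexI[of _ "amap F (\<eta> Y)"]) (auto simp: hom_def functor_simps)
qed

section \<open>Beck's monadicity theorem\<close>

definition reflects_isos :: "('o1, 'm1) cat \<Rightarrow> ('o2, 'm2) cat \<Rightarrow> ('o1, 'm1, 'o2, 'm2) func \<Rightarrow> bool" where
  "reflects_isos A B K \<longleftrightarrow> (\<forall>f\<in>Arr A. iso B (amap K f) \<longrightarrow> iso A f)"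

text \<open>For an algebra \<open>(Y, y)\<close>, \<open>F y, \<epsilon> (F Y) : F G F Y \<rightarrow> F Y\<close> is its canonical presentation.\<close>

definition preserved_canonical_coequalizers ::
    "('oa, 'ma) cat \<Rightarrow> ('od, 'md) cat \<Rightarrow> ('od, 'md, 'oa, 'ma) func \<Rightarrow> ('oa, 'ma, 'od, 'md) func
     \<Rightarrow> ('od \<Rightarrow> 'md) \<Rightarrow> ('oa \<Rightarrow> 'ma) \<Rightarrow> bool" where
  "preserved_canonical_coequalizers A D F G \<eta> \<epsilon> \<longleftrightarrow>
     (\<forall>(Y, y)\<in>EM_algebras D F G \<eta> \<epsilon>. \<exists>q. coequalizer A (amap F y) (\<epsilon> (omap F Y)) q \<and>
        coequalizer D (amap G (amap F y)) (amap G (\<epsilon> (omap F Y))) (amap G q))"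

context
  fixes A :: "('oa, 'ma) cat" and D :: "('od, 'md) cat" and F G \<eta> \<epsilon>
  assumes adj: "adjunction A D F G \<eta> \<epsilon>"
begin

lemma counit_coequalizer:
  assumes refl: "reflects_isos A D G" and coeq: "preserved_canonical_coequalizers A D F G \<eta> \<epsilon>"
    and X: "X \<in> Obj A"
  shows "coequalizer A (amap F (amap G (\<epsilon> X))) (\<epsilon> (omap F (omap G X))) (\<epsilon> X)"
proof -
  note Aj = adj_simps[OF adj]
  have W: "(omap G X, amap G (\<epsilon> X)) \<in> EM_algebras D F G \<eta> \<epsilon>"
    by (rule comparison_obj[OF adj X])
  obtain q where q: "coequalizer A (amap F (amap G (\<epsilon> X))) (\<epsilon> (omap F (omap G X))) q"
    and Gq: "coequalizer D (amap G (amap F (amap G (\<epsilon> X)))) (amap G (\<epsilon> (omap F (omap G X)))) (amap G q)"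
    using coeq W unfolding preserved_canonical_coequalizers_def by blast
  note qa = coequalizerD[OF q]
  have "Comp A (\<epsilon> X) (amap F (amap G (\<epsilon> X))) = Comp A (\<epsilon> X) (\<epsilon> (omap F (omap G X)))"
    using eps_nat[OF adj, of "\<epsilon> X"] X Aj by simp
  then obtain c where c: "c \<in> Arr A" "Dom A c = Cod A q" "Cod A c = X" "Comp A c q = \<epsilon> X"
    using coequalizer_factor[OF q, of "\<epsilon> X"] qa X Aj by (auto simp: functor_simps)
  have "Comp D (amap G c) (amap G q) = amap G (\<epsilon> X)"
    using c qa by (simp add: functor_comp[OF adj_G[OF adj], symmetric])
  \<comment> \<open>\<open>G (\<epsilon> X)\<close> is a split coequalizer of the same pair, so \<open>G c\<close> compares two coequalizers\<close>
  then have "iso D (amap G c)"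
    using coequalizer_unique_iso[OF adj_D[OF adj] Gq EM_algebra_coequalizer[OF adj W], of "amap G c"] c qa Aj X
    by (simp add: functor_simps)
  then have "iso A c" using refl c unfolding reflects_isos_def by blast
  then show ?thesis using coequalizer_comp_iso[OF adj_C[OF adj] q, of c] c by simp
qed

lemma comparison_faithful:
  assumes counit: "\<And>X. X \<in> Obj A \<Longrightarrow> coequalizer A (amap F (amap G (\<epsilon> X))) (\<epsilon> (omap F (omap G X))) (\<epsilon> X)"
  shows "faithful A (EM_of_adj D F G \<eta> \<epsilon>) (comparison A G \<epsilon>)"
  unfolding faithful_def
proof (intro ballI impI)
  fix f g assume f: "f \<in> Arr A" "g \<in> Arr A" "Dom A f = Dom A g" "Cod A f = Cod A g"
    "amap (comparison A G \<epsilon>) f = amap (comparison A G \<epsilon>) g"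
  then have Gfg: "amap G f = amap G g" by simp
  have "Comp A f (\<epsilon> (Dom A f)) = Comp A (\<epsilon> (Cod A f)) (amap F (amap G f))" using eps_nat[OF adj f(1)] by simp
  also have "\<dots> = Comp A (\<epsilon> (Cod A g)) (amap F (amap G g))" using Gfg f by simp
  also have "\<dots> = Comp A g (\<epsilon> (Dom A f))" using eps_nat[OF adj f(2)] f by simp
  finally have fg: "Comp A f (\<epsilon> (Dom A f)) = Comp A g (\<epsilon> (Dom A f))" .
  have X: "Dom A f \<in> Obj A" using f(1) adj_C[OF adj] by (simp add: cat_simps)
  have "Cod A (\<epsilon> (Dom A f)) = Dom A f" using eps_cod[OF adj X] .
  then show "f = g" using coequalizer_epi[OF adj_C[OF adj] counit[OF X] f(1) f(2)] fg f(3,4) by metis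
qed

lemma EM_hom_transpose_coequalizes:
  assumes X: "X \<in> Obj A" and Y: "Y \<in> Obj A" and h: "h \<in> hom D (omap G X) (omap G Y)"
    and hc: "Comp D h (amap G (\<epsilon> X)) = Comp D (amap G (\<epsilon> Y)) (amap G (amap F h))"
  shows "Comp A (Comp A (\<epsilon> Y) (amap F h)) (amap F (amap G (\<epsilon> X)))
       = Comp A (Comp A (\<epsilon> Y) (amap F h)) (\<epsilon> (omap F (omap G X)))"
proof -
  note Aj = adj_simps[OF adj] and F = adj_F[OF adj] and G = adj_G[OF adj] and cA = adj_C[OF adj]
  have h: "h \<in> Arr D" "Dom D h = omap G X" "Cod D h = omap G Y" using h by (auto simp: hom_def)
  have "Comp A (Comp A (\<epsilon> Y) (amap F h)) (amap F (amap G (\<epsilon> X)))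
      = Comp A (\<epsilon> Y) (amap F (Comp D h (amap G (\<epsilon> X))))"
    using h Aj X Y F G cA by (simp add: cat_simps functor_simps)
  also have "\<dots> = Comp A (\<epsilon> Y) (amap F (Comp D (amap G (\<epsilon> Y)) (amap G (amap F h))))" using hc by simp
  also have "\<dots> = Comp A (\<epsilon> Y) (Comp A (amap F (amap G (\<epsilon> Y))) (amap F (amap G (amap F h))))"
    using h Aj X Y F G cA by (simp add: cat_simps functor_simps)
  also have "\<dots> = Comp A (\<epsilon> Y) (Comp A (\<epsilon> (omap F (omap G Y))) (amap F (amap G (amap F h))))"
    using h Aj X Y F G cA eps_nat[OF adj, of "\<epsilon> Y"] by (intro comp_reassoc_eq) (auto simp: cat_simps functor_simps)
  also have "\<dots> = Comp A (\<epsilon> Y) (Comp A (amap F h) (\<epsilon> (omap F (omap G X))))"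
    using h F eps_nat[OF adj, of "amap F h"] by (simp add: functor_simps)
  also have "\<dots> = Comp A (Comp A (\<epsilon> Y) (amap F h)) (\<epsilon> (omap F (omap G X)))"
    using h Aj X Y F G cA by (simp add: cat_simps functor_simps)
  finally show ?thesis .
qed

lemma amap_eq_if_counit_factor:
  assumes X: "X \<in> Obj A" and Y: "Y \<in> Obj A" and h: "h \<in> hom D (omap G X) (omap G Y)"
    and k: "k \<in> hom A X Y" and kh: "Comp A k (\<epsilon> X) = Comp A (\<epsilon> Y) (amap F h)"
  shows "amap G k = h"
proof -
  note Aj = adj_simps[OF adj] and F = adj_F[OF adj] and G = adj_G[OF adj] and cD = adj_D[OF adj]
  have h: "h \<in> Arr D" "Dom D h = omap G X" "Cod D h = omap G Y"
    and k: "k \<in> Arr A" "Dom A k = X" "Cod A k = Y" using h k by (auto simp: hom_def)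
  have GX: "omap G X \<in> Obj D" and GY: "omap G Y \<in> Obj D" using X Y G by (simp_all add: functor_simps)
  have "amap G k = Comp D (amap G k) (Comp D (amap G (\<epsilon> X)) (\<eta> (omap G X)))"
    using adj_triangle_G[OF adj X] k G cD by (simp add: functor_simps cat_simps)
  also have "\<dots> = Comp D (amap G (Comp A k (\<epsilon> X))) (\<eta> (omap G X))"
    using k Aj X G GX cD by (simp add: cat_simps functor_simps)
  also have "\<dots> = Comp D (amap G (\<epsilon> Y)) (Comp D (amap G (amap F h)) (\<eta> (omap G X)))"
    using kh h Aj X Y F G GX cD by (simp add: cat_simps functor_simps)
  also have "\<dots> = Comp D (amap G (\<epsilon> Y)) (Comp D (\<eta> (omap G Y)) h)"
    using eta_nat[OF adj h(1)] h by simp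
  also have "\<dots> = h" using h Aj Y GY G cD adj_triangle_G[OF adj Y] by (simp add: comp_reassoc_id cat_simps functor_simps)
  finally show ?thesis .
qed

lemma comparison_full:
  assumes counit: "\<And>X. X \<in> Obj A \<Longrightarrow> coequalizer A (amap F (amap G (\<epsilon> X))) (\<epsilon> (omap F (omap G X))) (\<epsilon> X)"
  shows "full A (EM_of_adj D F G \<eta> \<epsilon>) (comparison A G \<epsilon>)"
  unfolding full_def
proof (intro ballI)
  note Aj = adj_simps[OF adj] and F = adj_F[OF adj] and G = adj_G[OF adj] and cA = adj_C[OF adj]
  fix X Y w assume X: "X \<in> Obj A" and Y: "Y \<in> Obj A"
    and w: "w \<in> hom (EM_of_adj D F G \<eta> \<epsilon>) (omap (comparison A G \<epsilon>) X) (omap (comparison A G \<epsilon>) Y)"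
  obtain h where wh: "w = ((omap G X, amap G (\<epsilon> X)), h, (omap G Y, amap G (\<epsilon> Y)))"
    and h: "h \<in> hom D (omap G X) (omap G Y)"
    and hc: "Comp D h (amap G (\<epsilon> X)) = Comp D (amap G (\<epsilon> Y)) (amap G (amap F h))"
    using w unfolding EM_cat_eq by (cases w) (auto simp: hom_def)
  let ?r = "Comp A (\<epsilon> Y) (amap F h)"
  have r: "?r \<in> Arr A" "Dom A ?r = omap F (omap G X)" using h Aj Y F cA by (simp_all add: cat_simps functor_simps hom_def)
  obtain k where k: "k \<in> Arr A" "Dom A k = X" "Cod A k = Y" "Comp A k (\<epsilon> X) = ?r"
    using coequalizer_factor[OF counit[OF X], of ?r] EM_hom_transpose_coequalizes[OF X Y h hc] r X Y h Aj F G
    by (auto simp: functor_simps cat_simps hom_def)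
  then have "amap G k = h" using amap_eq_if_counit_factor[OF X Y h] by (simp add: hom_def)
  then show "\<exists>f\<in>hom A X Y. amap (comparison A G \<epsilon>) f = w" using k wh by (intro bexI[of _ k]) (auto simp: hom_def)
qed

lemma preserved_coequalizer_iso:
  assumes W: "(Y, y) \<in> EM_algebras D F G \<eta> \<epsilon>"
    and Gq: "coequalizer D (amap G (amap F y)) (amap G (\<epsilon> (omap F Y))) (amap G q)"
    and q: "q \<in> hom A (omap F Y) Q"
  obtains j where "j \<in> hom D (omap G Q) Y" "iso D j" "Comp D j (amap G q) = y"
proof -
  note ys = EM_algebra_coequalizer[OF adj W] and cD = adj_D[OF adj] and G = adj_G[OF adj]
  note ya = coequalizerD[OF ys] and Gqa = coequalizerD[OF Gq]
  obtain j where j: "j \<in> Arr D" "Dom D j = Cod D (amap G q)" "Cod D j = Y" "Comp D j (amap G q) = y"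
    using coequalizer_factor[OF Gq, of y] ya EM_objD[OF W] Gqa by auto
  have "iso D j" by (rule coequalizer_unique_iso[OF cD Gq ys]) (use j Gqa cD in \<open>auto simp: cat_simps\<close>)
  moreover have "j \<in> hom D (omap G Q) Y" using j q G by (simp add: functor_simps hom_def)
  ultimately show ?thesis using that j by blast
qed

lemma preserved_coequalizer_section:
  assumes W: "(Y, y) \<in> EM_algebras D F G \<eta> \<epsilon>" and q: "q \<in> hom A (omap F Y) Q"
    and j: "j \<in> hom D (omap G Q) Y" and ji: "iso D j" and jq: "Comp D j (amap G q) = y"
  shows "Comp D (amap G q) (Comp D (\<eta> Y) j) = Id D (omap G Q)"
proof -
  note Aj = adj_simps[OF adj] and G = adj_G[OF adj] and cD = adj_D[OF adj] and wy = EM_objD[OF W]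
  have q: "q \<in> Arr A" "Dom A q = omap F Y" "Cod A q = Q" and j: "j \<in> Arr D" "Dom D j = omap G Q" "Cod D j = Y"
    using q j by (auto simp: hom_def)
  have GQ: "omap G Q \<in> Obj D" using j cD by (metis cat_simps)
  have "Comp D j (Comp D (amap G q) (Comp D (\<eta> Y) j)) = Comp D y (Comp D (\<eta> Y) j)"
    by (rule comp_reassoc) (use j q wy jq Aj G cD in \<open>auto simp: cat_simps functor_simps\<close>)
  also have "\<dots> = Comp D j (Id D (omap G Q))" using wy j Aj cD by (simp add: cat_simps comp_reassoc_id)
  finally have "Comp D j (Comp D (amap G q) (Comp D (\<eta> Y) j)) = Comp D j (Id D (omap G Q))" .
  then show ?thesis
    by (rule iso_mono[OF cD ji, rotated -1]) (use j q wy Aj G cD GQ in \<open>simp_all add: cat_simps functor_simps\<close>)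
qed

lemma preserved_coequalizer_EM_hom:
  assumes W: "(Y, y) \<in> EM_algebras D F G \<eta> \<epsilon>" and q: "q \<in> hom A (omap F Y) Q"
    and j: "j \<in> hom D (omap G Q) Y" and ji: "iso D j" and jq: "Comp D j (amap G q) = y"
  shows "Comp D j (amap G (\<epsilon> Q)) = Comp D y (amap G (amap F j))"
proof -
  note Aj = adj_simps[OF adj] and F = adj_F[OF adj] and G = adj_G[OF adj] and wy = EM_objD[OF W]
  note cA = adj_C[OF adj] and cD = adj_D[OF adj]
  note \<sigma>s = preserved_coequalizer_section[OF W q j ji jq]
  have q: "q \<in> Arr A" "Dom A q = omap F Y" "Cod A q = Q" and j: "j \<in> Arr D" "Dom D j = omap G Q" "Cod D j = Y"
    using q j by (auto simp: hom_def)
  have Q: "Q \<in> Obj A" and FY: "omap F Y \<in> Obj A" using q cA by (metis cat_simps)+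
  let ?\<sigma> = "Comp D (\<eta> Y) j"
  have \<sigma>: "?\<sigma> \<in> Arr D" "Dom D ?\<sigma> = omap G Q" "Cod D ?\<sigma> = omap G (omap F Y)"
    using j wy Aj cD by (simp_all add: cat_simps)
  show ?thesis
  proof (rule split_epi_cancel[OF cD, of "amap G (amap F (amap G q))" "amap G (amap F ?\<sigma>)"])
    show "Comp D (amap G (amap F (amap G q))) (amap G (amap F ?\<sigma>)) = Id D (Cod D (amap G (amap F (amap G q))))"
      using \<sigma>s \<sigma> q F G Q by (simp add: functor_simps functor_comp[OF F, symmetric] functor_comp[OF G, symmetric])
    have "Comp D (Comp D j (amap G (\<epsilon> Q))) (amap G (amap F (amap G q)))
        = Comp D j (amap G (Comp A (\<epsilon> Q) (amap F (amap G q))))"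
      using j q Aj Q F G cD cA by (simp add: cat_simps functor_simps)
    also have "\<dots> = Comp D j (Comp D (amap G q) (amap G (\<epsilon> (omap F Y))))"
      using eps_nat[OF adj q(1)] j q Aj Q F G cD cA FY by (simp add: cat_simps functor_simps)
    also have "\<dots> = Comp D y (amap G (\<epsilon> (omap F Y)))"
      by (rule comp_reassoc) (use j jq q Aj Q F G cD cA FY in \<open>auto simp: cat_simps functor_simps\<close>)
    also have "\<dots> = Comp D y (amap G (amap F y))" using wy by (simp add: adj_mult_def)
    also have "\<dots> = Comp D (Comp D y (amap G (amap F j))) (amap G (amap F (amap G q)))"
      using j jq q Aj Q F G cD cA FY wy
      by (simp add: cat_simps functor_simps functor_comp[OF F, symmetric] functor_comp[OF G, symmetric])
    finally show "Comp D (Comp D j (amap G (\<epsilon> Q))) (amap G (amap F (amap G q))) =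
        Comp D (Comp D y (amap G (amap F j))) (amap G (amap F (amap G q)))" .
  qed (use j \<sigma> q Aj Q F G cD cA FY wy in \<open>simp_all add: cat_simps functor_simps\<close>)
qed

lemma comparison_essentially_surj:
  assumes coeq: "preserved_canonical_coequalizers A D F G \<eta> \<epsilon>"
  shows "essentially_surj A (EM_of_adj D F G \<eta> \<epsilon>) (comparison A G \<epsilon>)"
  unfolding essentially_surj_def
proof
  note F = adj_F[OF adj] and G = adj_G[OF adj] and cA = adj_C[OF adj] and cD = adj_D[OF adj]
  fix V assume "V \<in> Obj (EM_of_adj D F G \<eta> \<epsilon>)"
  then obtain Y y where V: "V = (Y, y)" and W: "(Y, y) \<in> EM_algebras D F G \<eta> \<epsilon>"
    unfolding EM_cat_eq by (cases V) auto
  obtain q where q: "coequalizer A (amap F y) (\<epsilon> (omap F Y)) q"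
    and Gq: "coequalizer D (amap G (amap F y)) (amap G (\<epsilon> (omap F Y))) (amap G q)"
    using coeq W unfolding preserved_canonical_coequalizers_def by blast
  let ?Q = "Cod A q"
  have qh: "q \<in> hom A (omap F Y) ?Q" and Q: "?Q \<in> Obj A"
    using coequalizerD[OF q] EM_objD[OF W] F cA by (auto simp: hom_def functor_simps cat_simps)
  obtain j where j: "j \<in> hom D (omap G ?Q) Y" and ji: "iso D j" and jq: "Comp D j (amap G q) = y"
    using preserved_coequalizer_iso[OF W Gq qh] by blast
  have arr: "(omap (comparison A G \<epsilon>) ?Q, j, (Y, y)) \<in> Arr (EM_of_adj D F G \<eta> \<epsilon>)"
    using preserved_coequalizer_EM_hom[OF W qh j ji jq] j comparison_obj[OF adj Q] W
    unfolding EM_cat_eq by (simp add: hom_def)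
  have "iso (EM_of_adj D F G \<eta> \<epsilon>) (omap (comparison A G \<epsilon>) ?Q, j, (Y, y))"
    unfolding EM_cat_eq
    by (rule algebra_cat_isoI[OF cD is_functor_comp[OF F G] algebra_set_EM arr[unfolded EM_cat_eq] ji])
  then show "\<exists>X\<in>Obj A. \<exists>i. i \<in> hom (EM_of_adj D F G \<eta> \<epsilon>) (omap (comparison A G \<epsilon>) X) V \<and> iso (EM_of_adj D F G \<eta> \<epsilon>) i"
    using Q arr V by (intro bexI[of _ ?Q] exI[of _ "(omap (comparison A G \<epsilon>) ?Q, j, (Y, y))"]) (auto simp: hom_def EM_cat_eq)
qed

theorem beck_monadicity:
  assumes "reflects_isos A D G" and "preserved_canonical_coequalizers A D F G \<eta> \<epsilon>"
  shows "equivalence A (EM_of_adj D F G \<eta> \<epsilon>) (comparison A G \<epsilon>)"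
  using ff_essentially_surj_equivalence[OF comparison_functor[OF adj]
      comparison_faithful[OF counit_coequalizer] comparison_full[OF counit_coequalizer]
      comparison_essentially_surj] assms by blast

end

section \<open>Composite adjunctions\<close>

definition comp_unit :: "('od, 'md) cat \<Rightarrow> ('oc, 'mc, 'od, 'md) func \<Rightarrow> ('od, 'md, 'oc, 'mc) func
     \<Rightarrow> ('od \<Rightarrow> 'md) \<Rightarrow> ('oc \<Rightarrow> 'mc) \<Rightarrow> 'od \<Rightarrow> 'md" where
  "comp_unit D G F \<eta> \<iota> X = Comp D (amap G (\<iota> (omap F X))) (\<eta> X)"

definition comp_counit :: "('oa, 'ma) cat \<Rightarrow> ('oc, 'mc, 'oa, 'ma) func \<Rightarrow> ('oa, 'ma, 'oc, 'mc) func
     \<Rightarrow> ('oc \<Rightarrow> 'mc) \<Rightarrow> ('oa \<Rightarrow> 'ma) \<Rightarrow> 'oa \<Rightarrow> 'ma" where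
  "comp_counit A P U \<epsilon> \<kappa> B = Comp A (\<kappa> B) (amap P (\<epsilon> (omap U B)))"

context
  fixes A :: "('oa, 'ma) cat" and C :: "('oc, 'mc) cat" and D :: "('od, 'md) cat"
    and F G \<eta> \<epsilon> P U \<iota> \<kappa>
  assumes a1: "adjunction C D F G \<eta> \<epsilon>" and a2: "adjunction A C P U \<iota> \<kappa>"
begin

lemmas comp_adj_simps = adj_simps[OF a1] adj_simps[OF a2]

lemma comp_left_adjoint_functor: "is_functor D A (comp_functor P F)"
  using is_functor_comp[OF adj_F[OF a1] adj_F[OF a2]] .

lemma comp_right_adjoint_functor: "is_functor A D (comp_functor G U)"
  using is_functor_comp[OF adj_G[OF a2] adj_G[OF a1]] .

lemma comp_unit_nat_trans:
  "nat_trans D D (id_functor D) (comp_functor (comp_functor G U) (comp_functor P F)) (comp_unit D G F \<eta> \<iota>)"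
  unfolding nat_trans_def
proof (intro conjI ballI is_functor_id adj_D[OF a1]
    is_functor_comp[OF comp_left_adjoint_functor comp_right_adjoint_functor])
  note simps = comp_adj_simps and G = adj_G[OF a1]
  fix X assume "X \<in> Obj D"
  then show "comp_unit D G F \<eta> \<iota> X \<in> hom D (omap (id_functor D) X) (omap (comp_functor (comp_functor G U) (comp_functor P F)) X)"
    unfolding comp_unit_def using simps by (simp add: cat_simps functor_simps hom_def)
next
  note simps = comp_adj_simps and G = adj_G[OF a1]
  fix f assume f: "f \<in> Arr D"
  have "Comp D (comp_unit D G F \<eta> \<iota> (Cod D f)) f
      = Comp D (amap G (\<iota> (omap F (Cod D f)))) (Comp D (amap G (amap F f)) (\<eta> (Dom D f)))"
    unfolding comp_unit_def using simps f eta_nat[OF a1 f] by (simp add: cat_simps functor_simps hom_def)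
  also have "\<dots> = Comp D (amap G (amap U (amap P (amap F f)))) (Comp D (amap G (\<iota> (omap F (Dom D f)))) (\<eta> (Dom D f)))"
  proof (rule comp_reassoc_eq)
    show "Comp D (amap G (\<iota> (omap F (Cod D f)))) (amap G (amap F f)) =
      Comp D (amap G (amap U (amap P (amap F f)))) (amap G (\<iota> (omap F (Dom D f))))"
      using simps f eta_nat[OF a2, of "amap F f"]
      by (simp add: cat_simps functor_typing functor_comp[OF G, symmetric])
  qed (use f simps in \<open>auto simp: cat_simps functor_simps\<close>)
  finally show "Comp D (comp_unit D G F \<eta> \<iota> (Cod D f)) (amap (id_functor D) f) =
     Comp D (amap (comp_functor (comp_functor G U) (comp_functor P F)) f) (comp_unit D G F \<eta> \<iota> (Dom D f))"
    unfolding comp_unit_def by simp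
qed

lemma comp_counit_nat_trans:
  "nat_trans A A (comp_functor (comp_functor P F) (comp_functor G U)) (id_functor A) (comp_counit A P U \<epsilon> \<kappa>)"
  unfolding nat_trans_def
proof (intro conjI ballI is_functor_id adj_C[OF a2]
    is_functor_comp[OF comp_right_adjoint_functor comp_left_adjoint_functor])
  note simps = comp_adj_simps
  fix X assume "X \<in> Obj A"
  then show "comp_counit A P U \<epsilon> \<kappa> X \<in> hom A (omap (comp_functor (comp_functor P F) (comp_functor G U)) X) (omap (id_functor A) X)"
    unfolding comp_counit_def using simps by (simp add: cat_simps functor_simps hom_def)
next
  note simps = comp_adj_simps and P = adj_F[OF a2]
  fix k assume k: "k \<in> Arr A"
  have "Comp A (comp_counit A P U \<epsilon> \<kappa> (Cod A k)) (amap P (amap F (amap G (amap U k)))) =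
      Comp A (\<kappa> (Cod A k)) (Comp A (amap P (\<epsilon> (omap U (Cod A k)))) (amap P (amap F (amap G (amap U k)))))"
    unfolding comp_counit_def using simps k by (simp add: cat_simps functor_simps)
  also have "\<dots> = Comp A (\<kappa> (Cod A k)) (Comp A (amap P (amap U k)) (amap P (\<epsilon> (omap U (Dom A k)))))"
    using simps k eps_nat[OF a1, of "amap U k"]
    by (intro arg_cong[where f="Comp A (\<kappa> (Cod A k))"] functor_comp_eq[OF P]) (auto simp: cat_simps functor_simps)
  also have "\<dots> = Comp A k (comp_counit A P U \<epsilon> \<kappa> (Dom A k))"
    unfolding comp_counit_def using simps k eps_nat[OF a2 k] by (intro comp_reassoc_eq) (auto simp: cat_simps functor_simps)
  finally show "Comp A (comp_counit A P U \<epsilon> \<kappa> (Cod A k)) (amap (comp_functor (comp_functor P F) (comp_functor G U)) k) =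
      Comp A (amap (id_functor A) k) (comp_counit A P U \<epsilon> \<kappa> (Dom A k))" by simp
qed

lemma comp_triangle_left:
  assumes X: "X \<in> Obj D"
  shows "Comp A (comp_counit A P U \<epsilon> \<kappa> (omap (comp_functor P F) X)) (amap (comp_functor P F) (comp_unit D G F \<eta> \<iota> X))
    = Id A (omap (comp_functor P F) X)"
proof -
  note simps = comp_adj_simps and P = adj_F[OF a2]
  have FX: "omap F X \<in> Obj C" using simps X by (simp add: cat_simps functor_simps)
  have "Comp A (comp_counit A P U \<epsilon> \<kappa> (omap (comp_functor P F) X)) (amap (comp_functor P F) (comp_unit D G F \<eta> \<iota> X)) =
    Comp A (\<kappa> (omap P (omap F X))) (Comp A (amap P (\<epsilon> (omap U (omap P (omap F X)))))
       (Comp A (amap P (amap F (amap G (\<iota> (omap F X))))) (amap P (amap F (\<eta> X)))))"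
    unfolding comp_counit_def comp_unit_def using simps X FX by (simp add: cat_simps functor_simps)
  also have "\<dots> = Comp A (\<kappa> (omap P (omap F X))) (Comp A (amap P (\<iota> (omap F X)))
       (Comp A (amap P (\<epsilon> (omap F X))) (amap P (amap F (\<eta> X)))))"
    using simps X FX eps_nat[OF a1, of "\<iota> (omap F X)"]
    by (intro arg_cong[where f="Comp A (\<kappa> (omap P (omap F X)))"] comp_reassoc_eq functor_comp_eq[OF P])
      (auto simp: cat_simps functor_simps)
  also have "\<dots> = Comp A (\<kappa> (omap P (omap F X))) (amap P (\<iota> (omap F X)))"
    using simps X FX functor_comp_eq_id[OF P, of "amap F (\<eta> X)" "\<epsilon> (omap F X)" "omap F X"] adj_triangle_F[OF a1 X]
    by (simp add: cat_simps functor_typing functor_id)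
  also have "\<dots> = Id A (omap (comp_functor P F) X)"
    using simps X FX adj_triangle_F[OF a2 FX] by (simp add: cat_simps functor_simps)
  finally show ?thesis .
qed

lemma comp_triangle_right:
  assumes Y: "Y \<in> Obj A"
  shows "Comp D (amap (comp_functor G U) (comp_counit A P U \<epsilon> \<kappa> Y)) (comp_unit D G F \<eta> \<iota> (omap (comp_functor G U) Y))
    = Id D (omap (comp_functor G U) Y)"
proof -
  note simps = comp_adj_simps and G = adj_G[OF a1]
  have UY: "omap U Y \<in> Obj C" using simps Y by (simp add: cat_simps functor_simps)
  have "Comp D (amap (comp_functor G U) (comp_counit A P U \<epsilon> \<kappa> Y)) (comp_unit D G F \<eta> \<iota> (omap (comp_functor G U) Y)) =
    Comp D (amap G (amap U (\<kappa> Y))) (Comp D (amap G (amap U (amap P (\<epsilon> (omap U Y)))))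
      (Comp D (amap G (\<iota> (omap F (omap G (omap U Y))))) (\<eta> (omap G (omap U Y)))))"
    unfolding comp_counit_def comp_unit_def using simps Y UY by (simp add: cat_simps functor_simps)
  also have "\<dots> = Comp D (amap G (amap U (\<kappa> Y))) (Comp D (amap G (\<iota> (omap U Y)))
      (Comp D (amap G (\<epsilon> (omap U Y))) (\<eta> (omap G (omap U Y)))))"
    using simps Y UY eta_nat[OF a2, of "\<epsilon> (omap U Y)"]
    by (intro arg_cong[where f="Comp D (amap G (amap U (\<kappa> Y)))"] comp_reassoc_eq functor_comp_eq[OF G])
      (auto simp: cat_simps functor_simps)
  also have "\<dots> = Comp D (amap G (amap U (\<kappa> Y))) (amap G (\<iota> (omap U Y)))"
    using simps Y UY adj_triangle_G[OF a1 UY] by (simp add: cat_simps functor_simps)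
  also have "\<dots> = Id D (omap (comp_functor G U) Y)"
    using simps Y UY functor_comp_eq_id[OF G, of "\<iota> (omap U Y)" "amap U (\<kappa> Y)" "omap U Y"] adj_triangle_G[OF a2 Y]
    by (simp add: cat_simps functor_typing functor_id)
  finally show ?thesis .
qed

lemma adjunction_comp:
  "adjunction A D (comp_functor P F) (comp_functor G U) (comp_unit D G F \<eta> \<iota>) (comp_counit A P U \<epsilon> \<kappa>)"
  unfolding adjunction_def
  using comp_left_adjoint_functor comp_right_adjoint_functor comp_unit_nat_trans comp_counit_nat_trans comp_triangle_left comp_triangle_right by blast

end

lemma monadic_reflects_isos:
  assumes "monadic C D G"
  shows "reflects_isos C D G"
  unfolding reflects_isos_def
proof (intro ballI impI)
  fix f assume f: "f \<in> Arr C" and i: "iso D (amap G f)"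
  obtain F \<eta> \<epsilon> where adj: "adjunction C D F G \<eta> \<epsilon>"
    and eq: "equivalence C (EM_of_adj D F G \<eta> \<epsilon>) (comparison C G \<epsilon>)"
    using assms unfolding monadic_def by blast
  note K = comparison_functor[OF adj]
  have "amap (comparison C G \<epsilon>) f \<in> Arr (EM_of_adj D F G \<eta> \<epsilon>)" by (rule functor_arr[OF K f])
  then have "iso (EM_of_adj D F G \<eta> \<epsilon>) (amap (comparison C G \<epsilon>) f)"
    unfolding EM_cat_eq comparison_amap
    by (rule algebra_cat_isoI[OF adj_D[OF adj] is_functor_comp[OF adj_F[OF adj] adj_G[OF adj]] algebra_set_EM _ i])
  then show "iso C f" using ff_reflects_iso[OF K equivalenceD(1,2)[OF eq] f] by blast
qed

text \<open>The
  codomain of the split coequalizer \<open>e\<close> carries the Eilenberg-Moore algebra structure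
  \<open>e \<circ> G (\<epsilon> Xt) \<circ> G (F s)\<close>.\<close>

locale adjunction_split_pair =
  fixes C :: "('oc, 'mc) cat" and D :: "('od, 'md) cat" and F G \<eta> \<epsilon>
    and f g Xs Xt e s t Y
  assumes adj: "adjunction C D F G \<eta> \<epsilon>"
    and f: "f \<in> hom C Xs Xt" and g: "g \<in> hom C Xs Xt"
    and e: "e \<in> hom D (omap G Xt) Y" and s: "s \<in> hom D Y (omap G Xt)" and t: "t \<in> hom D (omap G Xt) (omap G Xs)"
    and ef: "Comp D e (amap G f) = Comp D e (amap G g)" and es: "Comp D e s = Id D Y"
    and gt: "Comp D (amap G g) t = Id D (omap G Xt)" and ft: "Comp D (amap G f) t = Comp D s e"
begin

definition induced_action :: 'md where
  "induced_action = Comp D e (Comp D (amap G (\<epsilon> Xt)) (amap G (amap F s)))"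

lemma arrs:
  "f \<in> Arr C" "Dom C f = Xs" "Cod C f = Xt" "g \<in> Arr C" "Dom C g = Xs" "Cod C g = Xt"
  "e \<in> Arr D" "Dom D e = omap G Xt" "Cod D e = Y" "s \<in> Arr D" "Dom D s = Y" "Cod D s = omap G Xt"
  "t \<in> Arr D" "Dom D t = omap G Xt" "Cod D t = omap G Xs"
  "Xs \<in> Obj C" "Xt \<in> Obj C" "Y \<in> Obj D" "omap G Xs \<in> Obj D" "omap G Xt \<in> Obj D"
  using f g e s t adj_C[OF adj] adj_D[OF adj] adj_G[OF adj]
  by (auto simp: hom_def cat_simps functor_simps)

lemmas split_simps = arrs adj_simps[OF adj]

lemma G_coequalizer: "coequalizer D (amap G f) (amap G g) e"
proof (rule split_coequalizer[OF adj_D[OF adj]])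
  show "split_fork D (amap G f) (amap G g) e s t"
    unfolding split_fork_def using split_simps ef es gt ft
    by (intro exI[of _ "omap G Xs"] exI[of _ "omap G Xt"] exI[of _ Y]) (simp add: hom_def functor_simps)
qed

lemma induced_action_arr:
  "induced_action \<in> Arr D" "Dom D induced_action = omap G (omap F Y)" "Cod D induced_action = Y"
  unfolding induced_action_def using split_simps by (simp_all add: cat_simps functor_simps)

lemma e_preserves_action: "Comp D e (amap G (\<epsilon> Xt)) = Comp D induced_action (amap G (amap F e))"
proof -
  note T = is_functor_comp[OF adj_F[OF adj] adj_G[OF adj]] and G = adj_G[OF adj]
  have E1: "Comp D (amap G (amap F s)) (amap G (amap F e)) = Comp D (amap G (amap F (amap G f))) (amap G (amap F t))"
    using functor_comp_eq[OF T, of e s t "amap G f"] split_simps ft by (simp add: functor_simps)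
  have E2: "Comp D (amap G (\<epsilon> Xt)) (amap G (amap F (amap G h))) = Comp D (amap G h) (amap G (\<epsilon> Xs))"
    if h: "h \<in> hom C Xs Xt" for h
    using functor_comp_eq[OF G, of "amap F (amap G h)" "\<epsilon> Xt" "\<epsilon> Xs" h] eps_nat[OF adj, of h] h split_simps
    by (simp add: functor_simps hom_def)
  have E3: "Comp D (amap G (amap F (amap G g))) (amap G (amap F t)) = Id D (omap G (omap F (omap G Xt)))"
    using functor_comp_eq_id[OF T, of t "amap G g" "omap G Xt"] split_simps gt by (simp add: functor_simps)
  have "Comp D induced_action (amap G (amap F e))
      = Comp D e (Comp D (amap G (\<epsilon> Xt)) (Comp D (amap G (amap F (amap G f))) (amap G (amap F t))))"
    unfolding induced_action_def using split_simps E1 by (simp add: cat_simps functor_simps)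
  also have "\<dots> = Comp D e (Comp D (amap G f) (Comp D (amap G (\<epsilon> Xs)) (amap G (amap F t))))"
    using E2[OF f] split_simps by (intro arg_cong[where f="Comp D e"] comp_reassoc_eq) (auto simp: cat_simps functor_simps)
  also have "\<dots> = Comp D e (Comp D (amap G g) (Comp D (amap G (\<epsilon> Xs)) (amap G (amap F t))))"
    using ef split_simps by (intro comp_reassoc_eq) (auto simp: cat_simps functor_simps)
  also have "\<dots> = Comp D e (Comp D (amap G (\<epsilon> Xt)) (Comp D (amap G (amap F (amap G g))) (amap G (amap F t))))"
    using E2[OF g] split_simps by (intro arg_cong[where f="Comp D e"] comp_reassoc_eq) (auto simp: cat_simps functor_simps)
  also have "\<dots> = Comp D e (amap G (\<epsilon> Xt))"
    using E3 split_simps by (simp add: cat_simps functor_simps)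
  finally show ?thesis by simp
qed

lemma induced_action_unit: "Comp D induced_action (\<eta> Y) = Id D Y"
proof -
  have "Comp D induced_action (\<eta> Y) = Comp D e (Comp D (amap G (\<epsilon> Xt)) (Comp D (amap G (amap F s)) (\<eta> Y)))"
    unfolding induced_action_def using split_simps by (simp add: cat_simps functor_simps)
  also have "\<dots> = Comp D e (Comp D (amap G (\<epsilon> Xt)) (Comp D (\<eta> (omap G Xt)) s))"
    using eta_nat[OF adj, of s] split_simps by simp
  also have "\<dots> = Comp D e s"
    using adj_triangle_G[OF adj, of Xt] split_simps by (intro arg_cong[where f="Comp D e"] comp_reassoc_id) (auto simp: cat_simps functor_simps)
  finally show ?thesis using es by simp
qed

lemma induced_action_assoc:
  "Comp D induced_action (amap G (amap F induced_action)) = Comp D induced_action (amap G (\<epsilon> (omap F Y)))"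
proof -
  note T = is_functor_comp[OF adj_F[OF adj] adj_G[OF adj]] and G = adj_G[OF adj] and ya = induced_action_arr
  note TT = is_functor_comp[OF T T] and eEM = e_preserves_action
  let ?y = induced_action and ?TTe = "amap G (amap F (amap G (amap F e)))"
  have cXt: "Comp D (amap G (\<epsilon> Xt)) (amap G (amap F (amap G (\<epsilon> Xt))))
      = Comp D (amap G (\<epsilon> Xt)) (amap G (\<epsilon> (omap F (omap G Xt))))"
    using comparison_obj[OF adj, of Xt] split_simps by (simp add: EM_obj_def adj_mult_def)
  have E4: "Comp D (amap G (amap F ?y)) ?TTe = Comp D (amap G (amap F e)) (amap G (amap F (amap G (\<epsilon> Xt))))"
    using functor_comp_eq[OF T, of "amap G (amap F e)" ?y "amap G (\<epsilon> Xt)" e] eEM split_simps ya by (simp add: functor_simps cat_simps)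
  have E5: "Comp D (amap G (\<epsilon> (omap F Y))) ?TTe = Comp D (amap G (amap F e)) (amap G (\<epsilon> (omap F (omap G Xt))))"
    using functor_comp_eq[OF G, of "amap F (amap G (amap F e))" "\<epsilon> (omap F Y)" "\<epsilon> (omap F (omap G Xt))" "amap F e"]
      eps_nat[OF adj, of "amap F e"] split_simps by (simp add: functor_simps cat_simps)
  show ?thesis
  proof (rule split_epi_cancel[OF adj_D[OF adj], of ?TTe "amap G (amap F (amap G (amap F s)))"])
    show "Comp D ?TTe (amap G (amap F (amap G (amap F s)))) = Id D (Cod D ?TTe)"
      using functor_comp_eq_id[OF TT, of s e Y] split_simps es by (simp add: functor_simps)
    have "Comp D (Comp D ?y (amap G (amap F ?y))) ?TTe
        = Comp D ?y (Comp D (amap G (amap F e)) (amap G (amap F (amap G (\<epsilon> Xt)))))"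
      using E4 split_simps ya by (simp add: cat_simps functor_simps)
    also have "\<dots> = Comp D e (Comp D (amap G (\<epsilon> Xt)) (amap G (amap F (amap G (\<epsilon> Xt)))))"
      using eEM[symmetric] split_simps ya by (intro comp_reassoc_eq) (auto simp: cat_simps functor_simps)
    also have "\<dots> = Comp D e (Comp D (amap G (\<epsilon> Xt)) (amap G (\<epsilon> (omap F (omap G Xt)))))"
      using cXt by simp
    also have "\<dots> = Comp D ?y (Comp D (amap G (amap F e)) (amap G (\<epsilon> (omap F (omap G Xt)))))"
      using eEM split_simps ya by (intro comp_reassoc_eq) (auto simp: cat_simps functor_simps)
    also have "\<dots> = Comp D (Comp D ?y (amap G (\<epsilon> (omap F Y)))) ?TTe"
      using E5 split_simps ya by (simp add: cat_simps functor_simps)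
    finally show "Comp D (Comp D ?y (amap G (amap F ?y))) ?TTe = Comp D (Comp D ?y (amap G (\<epsilon> (omap F Y)))) ?TTe" .
  qed (use split_simps ya in \<open>simp_all add: cat_simps functor_simps\<close>)
qed

lemma induced_algebra: "(Y, induced_action) \<in> EM_algebras D F G \<eta> \<epsilon>"
  using induced_action_unit induced_action_assoc induced_action_arr split_simps
  by (simp add: EM_obj_def hom_def adj_mult_def)

lemma factor_through_e_EM_hom:
  assumes W: "(V, w) \<in> EM_algebras D F G \<eta> \<epsilon>"
    and h: "Comp D h (amap G (\<epsilon> Xt)) = Comp D w (amap G (amap F h))"
    and u: "u \<in> hom D Y V" and uh: "Comp D u e = h"
  shows "Comp D u induced_action = Comp D w (amap G (amap F u))"
proof (rule split_epi_cancel[OF adj_D[OF adj], of "amap G (amap F e)" "amap G (amap F s)"])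
  note T = is_functor_comp[OF adj_F[OF adj] adj_G[OF adj]] and ya = induced_action_arr
  have u: "u \<in> Arr D" "Dom D u = Y" "Cod D u = V" using u by (auto simp: hom_def)
  have wa: "V \<in> Obj D" "w \<in> Arr D" "Dom D w = omap G (omap F V)" "Cod D w = V"
    using EM_objD[OF W] by auto
  show "Comp D (amap G (amap F e)) (amap G (amap F s)) = Id D (Cod D (amap G (amap F e)))"
    using functor_comp_eq_id[OF T, of s e Y] split_simps es by (simp add: functor_simps)
  have "Comp D (Comp D u induced_action) (amap G (amap F e)) = Comp D u (Comp D e (amap G (\<epsilon> Xt)))"
    using u ya split_simps e_preserves_action by (simp add: cat_simps functor_simps)
  also have "\<dots> = Comp D w (amap G (amap F (Comp D u e)))"
    using h uh u split_simps by (simp add: comp_reassoc[of D e u] cat_simps functor_simps)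
  also have "\<dots> = Comp D (Comp D w (amap G (amap F u))) (amap G (amap F e))"
    using u split_simps wa by (simp add: cat_simps functor_simps)
  finally show "Comp D (Comp D u induced_action) (amap G (amap F e))
      = Comp D (Comp D w (amap G (amap F u))) (amap G (amap F e))" .
qed (use u split_simps induced_action_arr EM_objD[OF W] in \<open>simp_all add: cat_simps functor_simps hom_def\<close>)

lemma comparison_coequalizer:
  "coequalizer (EM_of_adj D F G \<eta> \<epsilon>) (amap (comparison C G \<epsilon>) f) (amap (comparison C G \<epsilon>) g)
     (omap (comparison C G \<epsilon>) Xt, e, (Y, induced_action))"
  unfolding coequalizer_def
proof (intro conjI ballI impI)
  let ?E = "EM_of_adj D F G \<eta> \<epsilon>" and ?K = "comparison C G \<epsilon>" and ?y = induced_action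
  let ?eE = "(omap ?K Xt, e, (Y, ?y))"
  note eD = G_coequalizer
  have KXt: "omap ?K Xt \<in> EM_algebras D F G \<eta> \<epsilon>" using comparison_obj[OF adj] split_simps by simp
  have Kf: "amap ?K f = (omap ?K Xs, amap G f, omap ?K Xt)" and Kg: "amap ?K g = (omap ?K Xs, amap G g, omap ?K Xt)"
    using split_simps by simp_all
  show "amap ?K f \<in> Arr ?E" "amap ?K g \<in> Arr ?E"
    using comparison_arr[OF adj] arrs by (simp_all del: comparison_amap)
  show "?eE \<in> Arr ?E" using KXt induced_algebra e e_preserves_action unfolding EM_cat_eq by simp
  show "Dom ?E (amap ?K f) = Dom ?E (amap ?K g)" "Cod ?E (amap ?K f) = Cod ?E (amap ?K g)"
    "Dom ?E ?eE = Cod ?E (amap ?K f)" "Comp ?E ?eE (amap ?K f) = Comp ?E ?eE (amap ?K g)"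
    using Kf Kg ef unfolding EM_cat_eq by simp_all
  fix h assume h: "h \<in> Arr ?E" "Dom ?E h = Cod ?E (amap ?K f) \<and> Comp ?E h (amap ?K f) = Comp ?E h (amap ?K g)"
  obtain h0 Wo w where hh: "h = (omap ?K Xt, h0, (Wo, w))"
    using h Kf unfolding EM_cat_eq by (cases h) auto
  have W: "(Wo, w) \<in> EM_algebras D F G \<eta> \<epsilon>" and h0: "h0 \<in> Arr D" "Dom D h0 = omap G Xt" "Cod D h0 = Wo"
    and hEM: "Comp D h0 (amap G (\<epsilon> Xt)) = Comp D w (amap G (amap F h0))"
    using h(1) hh unfolding EM_cat_eq by (auto simp: hom_def)
  have "Comp D h0 (amap G f) = Comp D h0 (amap G g)" using h(2) hh Kf Kg unfolding EM_cat_eq by simp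
  then obtain u0 where u0: "u0 \<in> Arr D" "Dom D u0 = Y" "Cod D u0 = Wo" "Comp D u0 e = h0"
    using coequalizer_factor[OF eD, of h0] h0 split_simps by (auto simp: functor_simps)
  have u0EM: "Comp D u0 ?y = Comp D w (amap G (amap F u0))"
    using factor_through_e_EM_hom[OF W hEM _ u0(4)] u0 by (simp add: hom_def)
  show "\<exists>!u. u \<in> hom ?E (Cod ?E ?eE) (Cod ?E h) \<and> Comp ?E u ?eE = h"
  proof (rule ex1I[of _ "((Y, ?y), u0, (Wo, w))"])
    show "((Y, ?y), u0, (Wo, w)) \<in> hom ?E (Cod ?E ?eE) (Cod ?E h) \<and> Comp ?E ((Y, ?y), u0, (Wo, w)) ?eE = h"
      using induced_algebra W u0 u0EM hh unfolding EM_cat_eq by (simp add: hom_def)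
  next
    fix v assume v: "v \<in> hom ?E (Cod ?E ?eE) (Cod ?E h) \<and> Comp ?E v ?eE = h"
    obtain v0 where vv: "v = ((Y, ?y), v0, (Wo, w))" and v0: "v0 \<in> Arr D" "Dom D v0 = Y" "Cod D v0 = Wo"
      and v0e: "Comp D v0 e = h0"
      using v hh unfolding EM_cat_eq by (cases v) (auto simp: hom_def)
    have "v0 = u0" by (rule coequalizer_epi[OF adj_D[OF adj] eD]) (use v0 v0e u0 split_simps in auto)
    then show "v = ((Y, ?y), u0, (Wo, w))" using vv by simp
  qed
qed

end

lemma monadic_creates_split_coequalizer:
  assumes m: "monadic C D G" and f: "f \<in> hom C X Y" and g: "g \<in> hom C X Y"
    and split: "split_fork D (amap G f) (amap G g) e s t"
  shows "\<exists>q. coequalizer C f g q \<and> coequalizer D (amap G f) (amap G g) (amap G q)"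
proof -
  obtain F \<eta> \<epsilon> where adj: "adjunction C D F G \<eta> \<epsilon>"
    and eq: "equivalence C (EM_of_adj D F G \<eta> \<epsilon>) (comparison C G \<epsilon>)"
    using m unfolding monadic_def by blast
  obtain Z where e: "e \<in> hom D (omap G Y) Z" and s: "s \<in> hom D Z (omap G Y)" and t: "t \<in> hom D (omap G Y) (omap G X)"
    and ef: "Comp D e (amap G f) = Comp D e (amap G g)" and es: "Comp D e s = Id D Z"
    and gt: "Comp D (amap G g) t = Id D (omap G Y)" and ft: "Comp D (amap G f) t = Comp D s e"
    using split f adj_G[OF adj] unfolding split_fork_def by (auto simp: hom_def functor_simps)
  interpret adjunction_split_pair C D F G \<eta> \<epsilon> f g X Y e s t Z
    using adj f g e s t ef es gt ft by unfold_locales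
  let ?E = "EM_of_adj D F G \<eta> \<epsilon>" and ?K = "comparison C G \<epsilon>"
  let ?eE = "(omap ?K Y, e, (Z, induced_action))"
  note K = comparison_functor[OF adj] and cE = functor_cod_category[OF comparison_functor[OF adj]]
  note U = forget_functor[OF adj_D[OF adj] is_functor_comp[OF adj_F[OF adj] adj_G[OF adj]] algebra_set_EM,
      folded EM_cat_eq]
  obtain W i where W: "W \<in> Obj C" and i: "i \<in> hom ?E (omap ?K W) (Z, induced_action)" and ii: "iso ?E i"
    using equivalenceD(3)[OF eq] induced_algebra unfolding essentially_surj_def EM_cat_eq by auto
  let ?j = "inv_arr ?E i"
  have j: "?j \<in> Arr ?E" "Dom ?E ?j = (Z, induced_action)" "Cod ?E ?j = omap ?K W" and ji: "iso ?E ?j"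
    using iso_inv_arr[OF ii] i iso_inv_arr_iso[OF ii] by (auto simp: hom_def)
  have eE: "?eE \<in> Arr ?E" "Dom ?E ?eE = omap ?K Y" "Cod ?E ?eE = (Z, induced_action)"
    using coequalizerD(3)[OF comparison_coequalizer] arrs unfolding EM_cat_eq by simp_all
  have coeqE: "coequalizer ?E (amap ?K f) (amap ?K g) (Comp ?E ?j ?eE)"
    by (rule coequalizer_comp_iso[OF cE comparison_coequalizer ji]) (use j eE in simp)
  have "Comp ?E ?j ?eE \<in> hom ?E (omap ?K Y) (omap ?K W)"
    using j eE cE by (simp add: hom_def cat_simps)
  then obtain q where q: "q \<in> hom C Y W" and Kq: "amap ?K q = Comp ?E ?j ?eE"
    using fullD[OF equivalenceD(2)[OF eq] _ W] arrs by blast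
  have "coequalizer C f g q"
    by (rule ff_reflects_coequalizer[OF K equivalenceD(1,2)[OF eq]]) (use arrs q coeqE Kq in \<open>auto simp: hom_def\<close>)
  moreover have "amap G q = Comp D (amap (forget D (comp_functor G F)) ?j) e"
    using arg_cong[OF Kq, of "amap (forget D (comp_functor G F))"] functor_comp[OF U eE(1) j(1)] j eE by simp
  moreover have "coequalizer D (amap G f) (amap G g) (Comp D (amap (forget D (comp_functor G F)) ?j) e)"
    by (rule coequalizer_comp_iso[OF adj_D[OF adj] G_coequalizer functor_preserves_iso[OF U ji]])
      (use j eE functor_dom[OF U j(1)] arrs in simp)
  ultimately show ?thesis by auto
qed

definition lifts_reflexive_coequalizers ::
    "('oa, 'ma) cat \<Rightarrow> ('oc, 'mc) cat \<Rightarrow> ('oa, 'ma, 'oc, 'mc) func \<Rightarrow> bool" where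
  "lifts_reflexive_coequalizers A C U \<longleftrightarrow>
     (\<forall>k1 k2 q0. reflexive_pair A k1 k2 \<and> coequalizer C (amap U k1) (amap U k2) q0 \<longrightarrow>
        (\<exists>q. coequalizer A k1 k2 q \<and> amap U q = q0))"

lemma monadic_comp:
  assumes m: "monadic C D G" and a2: "adjunction A C P U \<iota> \<kappa>"
    and refl: "reflects_isos A C U" and lift: "lifts_reflexive_coequalizers A C U"
  shows "monadic A D (comp_functor G U)"
proof -
  obtain F \<eta> \<epsilon> where a1: "adjunction C D F G \<eta> \<epsilon>" using m unfolding monadic_def by blast
  let ?F' = "comp_functor P F" and ?G' = "comp_functor G U"
  let ?\<eta>' = "comp_unit D G F \<eta> \<iota>" and ?\<epsilon>' = "comp_counit A P U \<epsilon> \<kappa>"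
  note adj = adjunction_comp[OF a1 a2] and U = adj_G[OF a2]
  have "reflects_isos A D ?G'"
    using refl monadic_reflects_isos[OF m] functor_arr[OF U] unfolding reflects_isos_def by simp
  moreover have "preserved_canonical_coequalizers A D ?F' ?G' ?\<eta>' ?\<epsilon>'"
    unfolding preserved_canonical_coequalizers_def
  proof (intro ballI, clarify)
    fix Y y assume W: "(Y, y) \<in> EM_algebras D ?F' ?G' ?\<eta>' ?\<epsilon>'"
    let ?k1 = "amap ?F' y" and ?k2 = "?\<epsilon>' (omap ?F' Y)"
    have rp: "reflexive_pair A ?k1 ?k2" by (rule EM_algebra_reflexive_pair[OF adj W])
    then have "amap U ?k1 \<in> hom C (omap U (Dom A ?k1)) (omap U (Cod A ?k1))"
      "amap U ?k2 \<in> hom C (omap U (Dom A ?k1)) (omap U (Cod A ?k1))"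
      using U unfolding reflexive_pair_def by (auto simp: hom_def functor_simps)
    moreover have "split_fork D (amap G (amap U ?k1)) (amap G (amap U ?k2)) y (?\<eta>' Y) (?\<eta>' (omap ?G' (omap ?F' Y)))"
      using EM_algebra_split_fork[OF adj W] by simp
    ultimately obtain q0 where q0: "coequalizer C (amap U ?k1) (amap U ?k2) q0"
      and Gq0: "coequalizer D (amap G (amap U ?k1)) (amap G (amap U ?k2)) (amap G q0)"
      using monadic_creates_split_coequalizer[OF m] by blast
    obtain q where "coequalizer A ?k1 ?k2 q" "amap U q = q0"
      using lift rp q0 unfolding lifts_reflexive_coequalizers_def by blast
    then show "\<exists>q. coequalizer A ?k1 ?k2 q \<and> coequalizer D (amap ?G' ?k1) (amap ?G' ?k2) (amap ?G' q)"
      using Gq0 by auto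
  qed
  ultimately show ?thesis unfolding monadic_def using adj beck_monadicity[OF adj] by blast
qed

section \<open>Algebras for an endofunctor\<close>

lemma forget_reflects_isos:
  assumes c: "category C" and T: "is_functor C C T"
  shows "reflects_isos (Alg_cat C T) C (forget C T)"
  unfolding reflects_isos_def
proof (intro ballI impI)
  fix k assume k: "k \<in> Arr (Alg_cat C T)" and i: "iso C (amap (forget C T) k)"
  obtain A k0 B where kk: "k = (A, k0, B)" by (cases k) auto
  show "iso (Alg_cat C T) k"
    using algebra_cat_isoI[OF c T algebra_set_Alg k[unfolded kk Alg_cat_eq]] i unfolding kk Alg_cat_eq by simp
qed

context
  fixes C :: "('o, 'm) cat" and T A B f0 g0 q0
  assumes c: "category C" and T: "is_functor C C T"
    and f: "(A, f0, B) \<in> Arr (Alg_cat C T)" and g: "(A, g0, B) \<in> Arr (Alg_cat C T)"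
    and q: "coequalizer C f0 g0 q0" and Tq: "coequalizer C (amap T f0) (amap T g0) (amap T q0)"
begin

lemma coequalizer_algebra_structure:
  obtains c where "(B, q0, (Cod C q0, c)) \<in> Arr (Alg_cat C T)"
proof -
  obtain Ao a Bo b where AB: "A = (Ao, a)" "B = (Bo, b)" by (cases A, cases B)
  have fA: "f0 \<in> Arr C" "Dom C f0 = Ao" "Cod C f0 = Bo" "Comp C f0 a = Comp C b (amap T f0)"
    and gA: "g0 \<in> Arr C" "Dom C g0 = Ao" "Cod C g0 = Bo" "Comp C g0 a = Comp C b (amap T g0)"
    and Ao: "Ao \<in> Obj C" "a \<in> Arr C" "Dom C a = omap T Ao" "Cod C a = Ao"
    and Bo: "Bo \<in> Obj C" "b \<in> Arr C" "Dom C b = omap T Bo" "Cod C b = Bo"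
    using f g AB unfolding Alg_cat_eq by (auto simp: hom_def)
  note qa = coequalizerD[OF q]
  have Z: "Cod C q0 \<in> Obj C" using qa c by (simp add: cat_simps)
  note ar = fA gA Ao Bo qa Z c T
  let ?r = "Comp C q0 b"
  have "Comp C ?r (amap T f0) = Comp C q0 (Comp C f0 a)" using ar by (simp add: cat_simps functor_simps)
  also have "\<dots> = Comp C q0 (Comp C g0 a)"
    using ar by (intro comp_reassoc_eq) (auto simp: cat_simps functor_simps)
  also have "\<dots> = Comp C ?r (amap T g0)" using ar by (simp add: cat_simps functor_simps)
  finally obtain cc where cc: "cc \<in> Arr C" "Dom C cc = Cod C (amap T q0)" "Cod C cc = Cod C q0"
    "Comp C cc (amap T q0) = ?r"
    using coequalizer_factor[OF Tq, of ?r] ar by (auto simp: functor_simps cat_simps)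
  then have "(B, q0, (Cod C q0, cc)) \<in> Arr (Alg_cat C T)"
    using f AB ar unfolding Alg_cat_eq by (auto simp: hom_def functor_simps)
  then show ?thesis by (rule that)
qed

lemma coequalizer_factor_algebra_hom:
  assumes qc: "(B, q0, (Cod C q0, c)) \<in> Arr (Alg_cat C T)" and h: "(B, h, (V, w)) \<in> Arr (Alg_cat C T)"
    and u: "u \<in> hom C (Cod C q0) V" "Comp C u q0 = h"
  shows "((Cod C q0, c), u, (V, w)) \<in> Arr (Alg_cat C T)"
proof -
  note qa = coequalizerD[OF q] and Tqa = coequalizerD[OF Tq]
  have c_alg: "c \<in> Arr C" "Dom C c = omap T (Cod C q0)" "Cod C c = Cod C q0"
    "Comp C q0 (snd B) = Comp C c (amap T q0)"
    using qc unfolding Alg_cat_eq by (auto simp: hom_def)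
  have W: "V \<in> Obj C" "w \<in> Arr C" "Dom C w = omap T V" "Cod C w = V"
    and hA: "Comp C h (snd B) = Comp C w (amap T h)"
    using h unfolding Alg_cat_eq by (auto simp: hom_def)
  have u0: "u \<in> Arr C" "Dom C u = Cod C q0" "Cod C u = V" using u by (auto simp: hom_def)
  have "Comp C u c = Comp C w (amap T u)"
  proof (rule coequalizer_epi[OF c Tq])
    have "Comp C (Comp C u c) (amap T q0) = Comp C u (Comp C q0 (snd B))"
      using u0 c_alg qa T c by (simp add: cat_simps functor_simps)
    also have "\<dots> = Comp C h (snd B)"
      using u u0 qa c f unfolding Alg_cat_eq by (auto simp: hom_def cat_simps)
    also have "\<dots> = Comp C w (amap T (Comp C u q0))" using hA u(2) by simp
    also have "\<dots> = Comp C (Comp C w (amap T u)) (amap T q0)"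
      using u0 qa W T c by (simp add: cat_simps functor_simps)
    finally show "Comp C (Comp C u c) (amap T q0) = Comp C (Comp C w (amap T u)) (amap T q0)" .
  qed (use u0 c_alg qa W Tqa T c in \<open>simp_all add: cat_simps functor_simps\<close>)
  then show ?thesis using qc h u0 unfolding Alg_cat_eq by (auto simp: hom_def)
qed

lemma Alg_coequalizer:
  assumes qc: "(B, q0, (Cod C q0, c)) \<in> Arr (Alg_cat C T)"
  shows "coequalizer (Alg_cat C T) (A, f0, B) (A, g0, B) (B, q0, (Cod C q0, c))"
  unfolding Alg_cat_eq coequalizer_def
proof (intro conjI ballI impI f[unfolded Alg_cat_eq] g[unfolded Alg_cat_eq] qc[unfolded Alg_cat_eq])
  let ?Al = "algebra_cat {(X, a). X \<in> Obj C \<and> a \<in> hom C (omap T X) X} C T"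
  note qa = coequalizerD[OF q]
  show "Comp ?Al (B, q0, Cod C q0, c) (A, f0, B) = Comp ?Al (B, q0, Cod C q0, c) (A, g0, B)"
    using qa by simp
  fix h assume h: "h \<in> Arr ?Al" "Dom ?Al h = Cod ?Al (A, f0, B) \<and> Comp ?Al h (A, f0, B) = Comp ?Al h (A, g0, B)"
  obtain h0 Wo w where hh: "h = (B, h0, (Wo, w))" using h by (cases h) auto
  have "Comp C h0 f0 = Comp C h0 g0" using h(2) hh by simp
  then obtain u0 where u0: "u0 \<in> hom C (Cod C q0) Wo" "Comp C u0 q0 = h0"
    using coequalizer_factor[OF q, of h0] h(1) hh qa f unfolding Alg_cat_eq by (auto simp: hom_def)
  have "(B, h0, (Wo, w)) \<in> Arr (Alg_cat C T)" using h(1) hh unfolding Alg_cat_eq by simp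
  then have u0A: "((Cod C q0, c), u0, (Wo, w)) \<in> Arr ?Al"
    using coequalizer_factor_algebra_hom[OF qc _ u0] unfolding Alg_cat_eq by blast
  show "\<exists>!u. u \<in> hom ?Al (Cod ?Al (B, q0, Cod C q0, c)) (Cod ?Al h) \<and> Comp ?Al u (B, q0, Cod C q0, c) = h"
  proof (rule ex1I[of _ "((Cod C q0, c), u0, (Wo, w))"])
    show "((Cod C q0, c), u0, (Wo, w)) \<in> hom ?Al (Cod ?Al (B, q0, Cod C q0, c)) (Cod ?Al h)
        \<and> Comp ?Al ((Cod C q0, c), u0, (Wo, w)) (B, q0, Cod C q0, c) = h"
      using u0A u0 hh by (simp add: hom_def)
  next
    fix v assume v: "v \<in> hom ?Al (Cod ?Al (B, q0, Cod C q0, c)) (Cod ?Al h) \<and> Comp ?Al v (B, q0, Cod C q0, c) = h"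
    obtain v0 where vv: "v = ((Cod C q0, c), v0, (Wo, w))" and v0: "v0 \<in> Arr C" "Dom C v0 = Cod C q0" "Cod C v0 = Wo"
      and v0e: "Comp C v0 q0 = h0"
      using v hh by (cases v) (auto simp: hom_def)
    have "v0 = u0" by (rule coequalizer_epi[OF c q]) (use v0 v0e u0 in \<open>auto simp: hom_def\<close>)
    then show "v = ((Cod C q0, c), u0, (Wo, w))" using vv by simp
  qed
qed (simp_all add: coequalizerD[OF q])

end

lemma forget_lifts_reflexive_coequalizers:
  assumes c: "category C" and T: "is_functor C C T" and pr: "preserves_reflexive_coequalizers C C T"
  shows "lifts_reflexive_coequalizers (Alg_cat C T) C (forget C T)"
  unfolding lifts_reflexive_coequalizers_def
proof (intro allI impI, elim conjE)
  fix k1 k2 q0 assume rp: "reflexive_pair (Alg_cat C T) k1 k2"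
    and q: "coequalizer C (amap (forget C T) k1) (amap (forget C T) k2) q0"
  obtain A f0 B g0 where k: "k1 = (A, f0, B)" "k2 = (A, g0, B)"
    and f: "(A, f0, B) \<in> Arr (Alg_cat C T)" and g: "(A, g0, B) \<in> Arr (Alg_cat C T)"
    using rp unfolding reflexive_pair_def Alg_cat_eq by (cases k1, cases k2) auto
  have "reflexive_pair C f0 g0"
    using functor_preserves_reflexive_pair[OF forget_functor[OF c T algebra_set_Alg, folded Alg_cat_eq] rp] k by simp
  then have Tq: "coequalizer C (amap T f0) (amap T g0) (amap T q0)"
    using pr q k unfolding preserves_reflexive_coequalizers_def by simp
  obtain cc where "(B, q0, (Cod C q0, cc)) \<in> Arr (Alg_cat C T)"
    using coequalizer_algebra_structure[OF c T f g _ Tq] q k by auto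
  then show "\<exists>q. coequalizer (Alg_cat C T) k1 k2 q \<and> amap (forget C T) q = q0"
    using Alg_coequalizer[OF c T f g _ Tq] q k by (intro exI[of _ "(B, q0, (Cod C q0, cc))"]) simp
qed

theorem theorem1p10:
  fixes C :: "('oc, 'mc) cat" and D :: "('od, 'md) cat"
    and T :: "('oc, 'mc, 'oc, 'mc) func"
    and G :: "('oc, 'mc, 'od, 'md) func"
  assumes "category C" and "category D"
    and "varietor C T"
    and "preserves_reflexive_coequalizers C C T"
    and "monadic C D G"
  shows "monadic (Alg_cat C T) D (comp_functor G (forget C T))"
proof -
  have T: "is_functor C C T" using assms(3) unfolding varietor_def by blast
  obtain P \<iota> \<kappa> where "adjunction (Alg_cat C T) C P (forget C T) \<iota> \<kappa>"
    using assms(3) unfolding varietor_def has_left_adjoint_def by blast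
  then show ?thesis
    using monadic_comp[OF assms(5)] forget_reflects_isos[OF assms(1) T]
      forget_lifts_reflexive_coequalizers[OF assms(1) T assms(4)] by blast
qed

end
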